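(* Let $1\le k\le n$, $p>q$, let $\phi$ be a positive smooth function on $\mathbb{S}^n$, and let $u$ be a positive smooth strictly spherical convex solution of $\sigma_k^{1/k}(b)=u^{\frac{p-1}{k}}(u^2+|\nabla u|^2)^{\frac{k+1-q}{2k}}\phi^{1/k}$, where $b=(b_{ij})=(u_{ij}+u\delta_{ij})$. Define, with $F=\sigma_k^{1/k}$ and $F^{ij}=\partial F/\partial b_{ij}$ evaluated at $b$, $$L_u(v)=F^{ij}(v_{ij}+v\delta_{ij})-\frac{p-1}{k}u^{\frac{p-1}{k}-1}\rho^{\frac{k+1-q}{k}}\phi^{\frac1k}v-\frac{k+1-q}{k}u^{\frac{p-1}{k}+1}\rho^{\frac{k+1-q}{k}-2}\phi^{\frac1k}v-\frac{k+1-q}{k}u^{\frac{p-1}{k}}\rho^{\frac{k+1-q}{k}-2}\phi^{\frac1k}\sum_l u_lv_l,$$ where $\rho=\sqrt{u^2+|\nabla u|^2}$. Then if $v\in C^2(\mathbb{S}^n)$ satisfies $L_u(v)=0$, it follows that $v\equiv0$.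
   Context: $\mathbb{S}^n$ is the round unit sphere; subscripts denote covariant derivatives in a local orthonormal frame, with summation over repeated indices. $\sigma_k$ is the $k$-th elementary symmetric polynomial of the eigenvalues of a symmetric matrix. $u$ is strictly spherical convex if $(u_{ij}+u\delta_{ij})$ is positive definite everywhere. *)

theory Defs
  imports "HOL-Analysis.Analysis"
begin

text \<open>The round unit sphere S^n is modelled as the unit sphere  sphere 0 1  in the
  Euclidean space real^'m with CARD('m) = n + 1.  Functions on S^n are given as
  real-valued functions on real^'m; regularity on S^n means regularity of the function
  on some open neighbourhood of the sphere.\<close>

fun Ck_on :: "nat \<Rightarrow> ('a::euclidean_space) set \<Rightarrow> ('a \<Rightarrow> real) \<Rightarrow> bool" where
  "Ck_on 0 S f = continuous_on S f"
| "Ck_on (Suc m) S f =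
     ((\<forall>x\<in>S. f differentiable (at x)) \<and>
      (\<forall>i\<in>Basis. Ck_on m S (\<lambda>x. frechet_derivative f (at x) i)))"

definition smooth_on :: "('a::euclidean_space) set \<Rightarrow> ('a \<Rightarrow> real) \<Rightarrow> bool" where
  "smooth_on S f \<longleftrightarrow> (\<forall>m. Ck_on m S f)"

definition Ck_sphere :: "nat \<Rightarrow> ('a::euclidean_space \<Rightarrow> real) \<Rightarrow> bool" where
  "Ck_sphere m f \<longleftrightarrow> (\<exists>S. open S \<and> sphere 0 1 \<subseteq> S \<and> Ck_on m S f)"

definition smooth_sphere :: "('a::euclidean_space \<Rightarrow> real) \<Rightarrow> bool" where
  "smooth_sphere f \<longleftrightarrow> (\<exists>S. open S \<and> sphere 0 1 \<subseteq> S \<and> smooth_on S f)"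

definition egrad :: "(real^'m \<Rightarrow> real) \<Rightarrow> real^'m \<Rightarrow> real^'m" where
  "egrad f x = (\<chi> i. frechet_derivative f (at x) (axis i 1))"

definition ehess :: "(real^'m \<Rightarrow> real) \<Rightarrow> real^'m \<Rightarrow> real^'m^'m" where
  "ehess f x = (\<chi> i j. frechet_derivative (\<lambda>y. frechet_derivative f (at y) (axis j 1)) (at x) (axis i 1))"

definition tproj :: "real^'m \<Rightarrow> real^'m^'m" where
  "tproj x = mat 1 - (\<chi> i j. x $ i * x $ j)"

definition sgrad :: "(real^'m \<Rightarrow> real) \<Rightarrow> real^'m \<Rightarrow> real^'m" where
  "sgrad f x = egrad f x - (egrad f x \<bullet> x) *\<^sub>R x"

text \<open>Spherical covariant Hessian (f_ij), as the matrix of the bilinear form on T_x,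
  extended by 0 on the normal direction:  Hess_S f(X,Y) = D^2 f(X,Y) - (Df . x)(X . Y).\<close>
definition shess :: "(real^'m \<Rightarrow> real) \<Rightarrow> real^'m \<Rightarrow> real^'m^'m" where
  "shess f x = tproj x ** (ehess f x - (egrad f x \<bullet> x) *\<^sub>R mat 1) ** tproj x"

definition bmat :: "(real^'m \<Rightarrow> real) \<Rightarrow> real^'m \<Rightarrow> real^'m^'m" where
  "bmat f x = shess f x + f x *\<^sub>R tproj x"

definition tan_eigenvalues :: "real^'m \<Rightarrow> real^'m^'m \<Rightarrow> (nat \<Rightarrow> real) \<Rightarrow> bool" where
  "tan_eigenvalues x B lam \<longleftrightarrow>
     (\<exists>e::nat \<Rightarrow> real^'m.
        (\<forall>i < CARD('m) - 1. e i \<bullet> x = 0 \<and> B *v e i = lam i *\<^sub>R e i) \<and>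
        (\<forall>i < CARD('m) - 1. \<forall>j < CARD('m) - 1. e i \<bullet> e j = (if i = j then 1 else 0)))"

definition esym :: "nat \<Rightarrow> nat \<Rightarrow> (nat \<Rightarrow> real) \<Rightarrow> real" where
  "esym k n lam = (\<Sum>S \<in> {S. S \<subseteq> {..<n} \<and> card S = k}. \<Prod>i\<in>S. lam i)"

definition sigma_tan :: "nat \<Rightarrow> real^'m \<Rightarrow> real^'m^'m \<Rightarrow> real" where
  "sigma_tan k x B = (THE s. \<exists>lam. tan_eigenvalues x B lam \<and> s = esym k (CARD('m) - 1) lam)"

definition Fk :: "nat \<Rightarrow> real^'m \<Rightarrow> real^'m^'m \<Rightarrow> real" where
  "Fk k x B = sigma_tan k x B powr (1 / real k)"

text \<open>F^{ij}(B) W_ij: derivative of F at B in the (symmetric) direction W.\<close>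
definition Flin :: "nat \<Rightarrow> real^'m \<Rightarrow> real^'m^'m \<Rightarrow> real^'m^'m \<Rightarrow> real" where
  "Flin k x B W = deriv (\<lambda>t. Fk k x (B + t *\<^sub>R W)) 0"

definition strictly_sph_convex :: "(real^'m \<Rightarrow> real) \<Rightarrow> bool" where
  "strictly_sph_convex u \<longleftrightarrow>
     (\<forall>x \<in> sphere 0 1. \<forall>y. y \<bullet> x = 0 \<and> y \<noteq> 0 \<longrightarrow> y \<bullet> (bmat u x *v y) > 0)"

definition rho :: "(real^'m \<Rightarrow> real) \<Rightarrow> real^'m \<Rightarrow> real" where
  "rho u x = sqrt ((u x)\<^sup>2 + (norm (sgrad u x))\<^sup>2)"

definition Lop :: "nat \<Rightarrow> real \<Rightarrow> real \<Rightarrow> (real^'m \<Rightarrow> real) \<Rightarrow> (real^'m \<Rightarrow> real)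
                     \<Rightarrow> (real^'m \<Rightarrow> real) \<Rightarrow> real^'m \<Rightarrow> real" where
  "Lop k p q \<phi> u v x =
     Flin k x (bmat u x) (bmat v x)
     - ((p - 1) / k) * u x powr ((p - 1) / k - 1) * rho u x powr ((k + 1 - q) / k)
         * \<phi> x powr (1 / k) * v x
     - ((k + 1 - q) / k) * u x powr ((p - 1) / k + 1) * rho u x powr ((k + 1 - q) / k - 2)
         * \<phi> x powr (1 / k) * v x
     - ((k + 1 - q) / k) * u x powr ((p - 1) / k) * rho u x powr ((k + 1 - q) / k - 2)
         * \<phi> x powr (1 / k) * (sgrad u x \<bullet> sgrad v x)"

end

theory Submission
  imports Defs
begin

text \<open>Let \<open>w = v / u\<close> and let \<open>s = \<plusminus>1\<close>. At a maximum point \<open>x\<close> of \<open>s w\<close> on the sphere, with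
  \<open>c = w x\<close>, the function \<open>v - c u\<close> touches \<open>0\<close> from the side given by \<open>s\<close>: there
  \<open>\<nabla>v = c \<nabla>u\<close>, and the tangential Hessians satisfy \<open>s (b[v] - c b[u]) \<le> 0\<close>. Since
  \<open>F = \<sigma>\<^sub>k\<^sup>1\<^sup>/\<^sup>k\<close> is increasing on the positive cone and homogeneous of degree one,
  \<open>s F\<^sup>i\<^sup>j b[v]\<^sub>i\<^sub>j \<le> s c F\<^sup>i\<^sup>j b[u]\<^sub>i\<^sub>j = s c F(b[u])\<close>. On the other hand, substituting \<open>v = c u\<close>
  and \<open>\<nabla>v = c \<nabla>u\<close> into \<open>L\<^sub>u v = 0\<close> and using the equation for \<open>u\<close> gives
  \<open>F\<^sup>i\<^sup>j b[v]\<^sub>i\<^sub>j = (1 + (p - q) / k) c F(b[u])\<close>. Hence \<open>s c (p - q) \<le> 0\<close>, i.e. \<open>s c \<le> 0\<close>,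
  so \<open>max w \<le> 0 \<le> min w\<close>.

  Because \<open>\<sigma>\<^sub>k\<close> is defined through eigenvalues, its differentiability is obtained by
  expressing it via Newton's identities as a polynomial in the traces of matrix powers; the
  derivative in a direction \<open>W\<close> is then that of \<open>\<sigma>\<^sub>k\<close> of the eigenvalues perturbed by the
  diagonal of \<open>W\<close> in an eigenbasis.\<close>

section \<open>Elementary symmetric functions and Newton's identities\<close>

lemma esym_0 [simp]: "esym 0 n lam = 1"
proof -
  have "{S. S \<subseteq> {..<n} \<and> card S = 0} = {{}}"
    using finite_subset[of _ "{..<n}"] by fastforce
  then show ?thesis by (simp add: esym_def)
qed

lemma esym_Suc_0 [simp]: "esym (Suc k) 0 lam = 0"
proof -
  have "{S. S \<subseteq> {..<0::nat} \<and> card S = Suc k} = {}" by auto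
  then show ?thesis by (simp add: esym_def)
qed

lemma finite_subsets_card: "finite {S. S \<subseteq> {..<n::nat} \<and> card S = k}"
  by (rule finite_subset[of _ "Pow {..<n}"]) auto

lemma esym_Suc_Suc:
  "esym (Suc k) (Suc n) lam = esym (Suc k) n lam + lam n * esym k n lam"
proof -
  let ?A = "{S. S \<subseteq> {..<n} \<and> card S = Suc k}"
  let ?B = "{S. S \<subseteq> {..<n} \<and> card S = k}"
  have split: "{S. S \<subseteq> {..<Suc n} \<and> card S = Suc k} = ?A \<union> insert n ` ?B"
  proof (rule set_eqI, rule iffI)
    fix S assume "S \<in> {S. S \<subseteq> {..<Suc n} \<and> card S = Suc k}"
    then have S: "S \<subseteq> {..<Suc n}" "card S = Suc k" by auto
    have "finite S" using S(1) finite_subset by blast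
    show "S \<in> ?A \<union> insert n ` ?B"
    proof (cases "n \<in> S")
      case True
      then have "S - {n} \<in> ?B" "S = insert n (S - {n})" using S \<open>finite S\<close> by auto
      then show ?thesis by blast
    next
      case False
      then show ?thesis using S by (auto simp: less_Suc_eq)
    qed
  next
    fix S assume "S \<in> ?A \<union> insert n ` ?B"
    then show "S \<in> {S. S \<subseteq> {..<Suc n} \<and> card S = Suc k}"
      by (auto simp: finite_subset card_insert_if)
  qed
  have inj: "inj_on (insert n) ?B"
    by (rule inj_onI) (metis insert_ident lessThan_iff mem_Collect_eq order_less_irrefl subsetD)
  have "(\<Sum>S\<in>insert n ` ?B. \<Prod>i\<in>S. lam i) = (\<Sum>T\<in>?B. \<Prod>i\<in>insert n T. lam i)"
    using inj by (simp add: sum.reindex)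
  also have "\<dots> = (\<Sum>T\<in>?B. lam n * (\<Prod>i\<in>T. lam i))"
  proof (rule sum.cong[OF refl])
    fix T assume "T \<in> ?B"
    then have "finite T" "n \<notin> T" using finite_subset by auto
    then show "(\<Prod>i\<in>insert n T. lam i) = lam n * (\<Prod>i\<in>T. lam i)" by simp
  qed
  also have "\<dots> = lam n * esym k n lam" by (simp add: esym_def sum_distrib_left)
  finally show ?thesis
    unfolding esym_def split
    by (subst sum.union_disjoint) (auto simp: finite_subsets_card)
qed

lemma esym_alternating_sum:
  "(\<Sum>i\<le>K. (- lam n)^(K - i) * esym i (Suc n) lam) = esym K n lam"
proof (induction K)
  case (Suc K)
  have "(\<Sum>i\<le>K. (- lam n)^(Suc K - i) * esym i (Suc n) lam)
      = (- lam n) * (\<Sum>i\<le>K. (- lam n)^(K - i) * esym i (Suc n) lam)"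
    unfolding sum_distrib_left by (rule sum.cong) (auto simp: Suc_diff_le)
  then show ?case using Suc by (simp add: esym_Suc_Suc)
qed simp

definition power_sum :: "nat \<Rightarrow> (nat \<Rightarrow> real) \<Rightarrow> nat \<Rightarrow> real" where
  "power_sum n lam j = (\<Sum>l<n. lam l ^ j)"

lemma esym_Suc_weighted_alternating_sum:
  "(\<Sum>i\<le>Suc k. (-1)^(Suc k - i) * esym i (Suc n) lam * f (Suc (Suc k) - i))
     = (\<Sum>i\<le>Suc k. (-1)^(Suc k - i) * esym i n lam * f (Suc (Suc k) - i))
       + lam n * (\<Sum>i\<le>k. (-1)^(k - i) * esym i n lam * f (Suc k - i))"
proof -
  let ?E = "\<lambda>i. esym i n lam" and ?E' = "\<lambda>i. esym i (Suc n) lam"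
  have "(\<Sum>i\<le>k. (-1)^(Suc k - Suc i) * ?E' (Suc i) * f (Suc (Suc k) - Suc i))
     = (\<Sum>i\<le>k. (-1)^(Suc k - Suc i) * ?E (Suc i) * f (Suc (Suc k) - Suc i)
          + lam n * ((-1)^(k - i) * ?E i * f (Suc k - i)))"
    by (rule sum.cong[OF refl]) (simp add: esym_Suc_Suc distrib_left distrib_right mult_ac)
  then show ?thesis
    by (simp only: sum.atMost_Suc_shift diff_zero esym_0) (simp add: sum.distrib sum_distrib_left)
qed

lemma esym_Suc_alternating_powers:
  "(\<Sum>i\<le>k. (-1)^(k - i) * esym i (Suc n) lam * lam n ^ (Suc k - i)) = lam n * esym k n lam"
proof -
  have "(\<Sum>i\<le>k. (-1)^(k - i) * esym i (Suc n) lam * lam n ^ (Suc k - i))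
      = lam n * (\<Sum>i\<le>k. (- lam n)^(k - i) * esym i (Suc n) lam)"
    unfolding sum_distrib_left
  proof (rule sum.cong[OF refl])
    fix i assume "i \<in> {..k}"
    then have "Suc k - i = Suc (k - i)" by auto
    moreover have "(- lam n)^(k - i) = (-1)^(k - i) * lam n ^ (k - i)" by (rule power_minus)
    ultimately show "(-1)^(k - i) * esym i (Suc n) lam * lam n ^ (Suc k - i)
        = lam n * ((- lam n)^(k - i) * esym i (Suc n) lam)"
      by (simp only: power_Suc mult_ac)
  qed
  then show ?thesis by (simp add: esym_alternating_sum)
qed

lemma newton_identity:
  "real (Suc k) * esym (Suc k) n lam
     = (\<Sum>i\<le>k. (-1)^(k - i) * esym i n lam * power_sum n lam (Suc k - i))"
proof (induction n arbitrary: k)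
  case 0 then show ?case by (simp add: power_sum_def)
next
  case (Suc n)
  let ?E = "\<lambda>i. esym i n lam" and ?E' = "\<lambda>i. esym i (Suc n) lam"
  let ?p = "power_sum n lam"
  have old_variables: "(\<Sum>i\<le>k. (-1)^(k - i) * ?E' i * ?p (Suc k - i))
      = real (Suc k) * ?E (Suc k) + lam n * (real k * ?E k)"
  proof (cases k)
    case 0 then show ?thesis using Suc.IH[of 0] by simp
  next
    case (Suc k')
    then show ?thesis
      using esym_Suc_weighted_alternating_sum[of k' n lam ?p] Suc.IH[of k'] Suc.IH[of k] by simp
  qed
  have "power_sum (Suc n) lam j = ?p j + lam n ^ j" for j by (simp add: power_sum_def)
  then have "(\<Sum>i\<le>k. (-1)^(k - i) * ?E' i * power_sum (Suc n) lam (Suc k - i))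
      = (\<Sum>i\<le>k. (-1)^(k - i) * ?E' i * ?p (Suc k - i))
        + (\<Sum>i\<le>k. (-1)^(k - i) * ?E' i * lam n ^ (Suc k - i))"
    by (simp add: distrib_left sum.distrib)
  also have "\<dots> = real (Suc k) * (?E (Suc k) + lam n * ?E k)"
    unfolding old_variables esym_Suc_alternating_powers of_nat_Suc by (simp add: algebra_simps)
  finally show ?case by (simp add: esym_Suc_Suc)
qed

fun esym_newton :: "nat \<Rightarrow> (nat \<Rightarrow> real) \<Rightarrow> real" where
  "esym_newton 0 P = 1"
| "esym_newton (Suc m) P = (\<Sum>i\<le>m. (-1)^(m - i) * esym_newton i P * P (Suc m - i)) / real (Suc m)"

lemma esym_eq_esym_newton: "esym k n lam = esym_newton k (power_sum n lam)"
proof (induction k rule: less_induct)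
  case (less k)
  show ?case
  proof (cases k)
    case (Suc m)
    have "real (Suc m) * esym (Suc m) n lam
        = (\<Sum>i\<le>m. (-1)^(m - i) * esym_newton i (power_sum n lam) * power_sum n lam (Suc m - i))"
      unfolding newton_identity using less Suc by (intro sum.cong) auto
    then show ?thesis unfolding Suc by (simp add: field_simps del: of_nat_Suc)
  qed simp
qed

lemma esym_newton_cong: "(\<And>j. j > 0 \<Longrightarrow> P j = Q j) \<Longrightarrow> esym_newton m P = esym_newton m Q"
proof (induction m rule: less_induct)
  case (less m)
  then show ?case by (cases m) (auto intro!: sum.cong)
qed

fun esym_newton_deriv :: "nat \<Rightarrow> (nat \<Rightarrow> real) \<Rightarrow> (nat \<Rightarrow> real) \<Rightarrow> real" where
  "esym_newton_deriv 0 a b = 0"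
| "esym_newton_deriv (Suc m) a b =
     (\<Sum>i\<le>m. (-1)^(m - i) * (esym_newton_deriv i a b * a (Suc m - i) + esym_newton i a * b (Suc m - i)))
     / real (Suc m)"

lemma has_real_derivative_esym_newton:
  fixes P :: "nat \<Rightarrow> real \<Rightarrow> real"
  assumes d: "\<And>j. j > 0 \<Longrightarrow> (P j has_real_derivative b j) (at 0)"
    and v: "\<And>j. j > 0 \<Longrightarrow> P j 0 = a j"
  shows "((\<lambda>t. esym_newton m (\<lambda>j. P j t)) has_real_derivative esym_newton_deriv m a b) (at 0)"
proof (induction m rule: less_induct)
  case (less m)
  show ?case
  proof (cases m)
    case (Suc k)
    have "esym_newton i (\<lambda>j. P j 0) = esym_newton i a" for i by (rule esym_newton_cong) (simp add: v)
    moreover have "P (Suc k - i) 0 = a (Suc k - i)" if "i \<le> k" for i using v that by simp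
    moreover have "((\<lambda>t. esym_newton i (\<lambda>j. P j t) * P (Suc k - i) t) has_real_derivative
        esym_newton_deriv i a b * P (Suc k - i) 0 + esym_newton i (\<lambda>j. P j 0) * b (Suc k - i)) (at 0)"
      if "i \<le> k" for i
      using DERIV_mult[OF less.IH d, of i "Suc k - i"] that Suc by (simp add: mult.commute)
    ultimately have "((\<lambda>t. \<Sum>i\<le>k. (-1)^(k - i) * (esym_newton i (\<lambda>j. P j t) * P (Suc k - i) t))
        has_real_derivative (\<Sum>i\<le>k. (-1)^(k - i)
          * (esym_newton_deriv i a b * a (Suc k - i) + esym_newton i a * b (Suc k - i)))) (at 0)"
      by (intro DERIV_sum DERIV_cmult) auto
    from DERIV_cdivide[OF this, of "real (Suc k)"] show ?thesis
      using Suc by (simp add: mult.assoc)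
  qed simp
qed

lemma esym_mono:
  assumes "\<And>i. i < n \<Longrightarrow> 0 \<le> mu i \<and> mu i \<le> nu i"
  shows "esym k n mu \<le> esym k n nu"
  unfolding esym_def
proof (rule sum_mono)
  fix S assume "S \<in> {S. S \<subseteq> {..<n} \<and> card S = k}"
  then have "\<And>i. i \<in> S \<Longrightarrow> 0 \<le> mu i \<and> mu i \<le> nu i" using assms by auto
  then show "(\<Prod>i\<in>S. mu i) \<le> (\<Prod>i\<in>S. nu i)" by (rule prod_mono)
qed

lemma esym_cmult: "esym k n (\<lambda>i. a * lam i) = a ^ k * esym k n lam"
  unfolding esym_def sum_distrib_left
  by (rule sum.cong[OF refl]) (simp add: prod.distrib)

lemma esym_pos:
  assumes "\<And>i. i < n \<Longrightarrow> lam i > 0" and "k \<le> n"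
  shows "esym k n lam > 0"
  unfolding esym_def
proof (rule sum_pos2)
  show "{..<k} \<in> {S. S \<subseteq> {..<n} \<and> card S = k}" using assms(2) by auto
  show "0 < (\<Prod>i\<in>{..<k}. lam i)" using assms by (intro prod_pos) auto
  show "0 \<le> (\<Prod>i\<in>S. lam i)" if "S \<in> {S. S \<subseteq> {..<n} \<and> card S = k}" for S
    using that assms(1) by (intro prod_nonneg) (auto intro: less_imp_le)
qed (rule finite_subsets_card)

text \<open>Ellipticity and homogeneity of \<open>\<sigma>\<^sub>k\<close> together: moving the eigenvalues in a direction
  \<open>c \<lambda> + g\<close> with \<open>s g \<le> 0\<close> changes \<open>s \<sigma>\<^sub>k\<close> no faster than the dilation \<open>(1 + t c) \<lambda>\<close>.\<close>

lemma eventually_esym_perturbation_le: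
  assumes lam: "\<And>i. i < n \<Longrightarrow> lam i > 0" and s: "s = 1 \<or> s = -1"
    and g: "\<And>i. i < n \<Longrightarrow> s * g i \<le> 0"
  shows "\<forall>\<^sub>F t in at_right 0.
    s * esym k n (\<lambda>i. lam i + t * (c * lam i + g i)) \<le> s * ((1 + t * c) ^ k * esym k n lam)"
proof -
  have "\<forall>\<^sub>F t in at_right 0. 0 \<le> lam i + t * (c * lam i + g i)" if "i < n" for i
  proof -
    have "((\<lambda>t. lam i + t * (c * lam i + g i)) \<longlongrightarrow> lam i) (at_right 0)"
      by (auto intro!: tendsto_eq_intros)
    then have "\<forall>\<^sub>F t in at_right 0. 0 < lam i + t * (c * lam i + g i)"
      using lam[OF that] order_tendstoD(1) by blast
    then show ?thesis by (rule eventually_mono) simp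
  qed
  then have pos: "\<forall>\<^sub>F t in at_right 0. \<forall>i\<in>{..<n}. 0 \<le> lam i + t * (c * lam i + g i)"
    by (intro eventually_ball_finite) auto
  have "((\<lambda>t. 1 + t * c) \<longlongrightarrow> 1) (at_right (0::real))"
    by (auto intro!: tendsto_eq_intros)
  then have "\<forall>\<^sub>F t in at_right 0. 0 < 1 + t * c" using order_tendstoD(1) by fastforce
  then have dil: "\<forall>\<^sub>F t in at_right 0. 0 \<le> 1 + t * c" by (rule eventually_mono) simp
  from pos dil eventually_at_right_less[of "0::real"] show ?thesis
  proof eventually_elim
    case (elim t)
    have shift: "lam i + t * (c * lam i + g i) = (1 + t * c) * lam i + t * g i" for i
      by (simp add: algebra_simps)
    have dilation: "esym k n (\<lambda>i. (1 + t * c) * lam i) = (1 + t * c) ^ k * esym k n lam"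
      by (rule esym_cmult)
    from s show ?case
    proof
      assume "s = 1"
      then have "esym k n (\<lambda>i. (1 + t * c) * lam i + t * g i) \<le> esym k n (\<lambda>i. (1 + t * c) * lam i)"
        using elim g by (intro esym_mono) (auto simp: shift mult_nonneg_nonpos)
      then show ?thesis using \<open>s = 1\<close> by (simp add: shift dilation)
    next
      assume "s = -1"
      then have "esym k n (\<lambda>i. (1 + t * c) * lam i) \<le> esym k n (\<lambda>i. (1 + t * c) * lam i + t * g i)"
        using elim g lam by (intro esym_mono) (auto simp: less_imp_le)
      then show ?thesis using \<open>s = -1\<close> by (simp add: shift dilation)
    qed
  qed
qed

lemma has_real_derivative_le_if_eventually_le:
  fixes f g :: "real \<Rightarrow> real"
  assumes f: "(f has_real_derivative D) (at 0)" and g: "(g has_real_derivative E) (at 0)"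
    and "f 0 = g 0" and le: "\<forall>\<^sub>F t in at_right 0. f t \<le> g t"
  shows "D \<le> E"
proof (rule ccontr)
  assume "\<not> D \<le> E"
  then have "D - E > 0" by simp
  from DERIV_pos_inc_right[OF DERIV_diff[OF f g] this] obtain d
    where d: "d > 0" "\<And>h. h > 0 \<Longrightarrow> h < d \<Longrightarrow> f 0 - g 0 < f h - g h"
    by auto
  from le obtain b where b: "b > 0" "\<And>y. y > 0 \<Longrightarrow> y < b \<Longrightarrow> f y \<le> g y"
    unfolding eventually_at_right_field by auto
  define h where "h = min d b / 2"
  have "0 < h" "h < d" "h < b" using d(1) b(1) by (auto simp: h_def)
  then show False using d(2)[of h] b(2)[of h] \<open>f 0 = g 0\<close> by simp
qed

lemma esym_perturbation_derivative_le:
  assumes lam: "\<And>i. i < n \<Longrightarrow> lam i > 0" and s: "s = 1 \<or> s = -1"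
    and g: "\<And>i. i < n \<Longrightarrow> s * g i \<le> 0"
    and D: "((\<lambda>t. esym k n (\<lambda>i. lam i + t * (c * lam i + g i))) has_real_derivative D) (at 0)"
  shows "s * D \<le> s * (real k * c * esym k n lam)"
proof (rule has_real_derivative_le_if_eventually_le)
  show "((\<lambda>t. s * esym k n (\<lambda>i. lam i + t * (c * lam i + g i))) has_real_derivative s * D) (at 0)"
    using DERIV_cmult[OF D] by simp
  have "((\<lambda>t. 1 + t * c) has_real_derivative c) (at 0)" by (auto intro!: derivative_eq_intros)
  from DERIV_cmult[OF DERIV_mult[OF DERIV_power[OF this, of k] DERIV_const[of "esym k n lam"]], of s]
  show "((\<lambda>t. s * ((1 + t * c) ^ k * esym k n lam))
      has_real_derivative s * (real k * c * esym k n lam)) (at 0)"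
    by simp
qed (use eventually_esym_perturbation_le[OF lam s g] in simp_all)

section \<open>Orthonormal eigenbases of symmetric matrices on tangent spaces\<close>

lemma linear_coeff_zero_if_quadratic_nonpos:
  fixes c D :: real
  assumes "\<And>t. 2 * t * c + t^2 * D \<le> 0"
  shows "c = 0"
proof -
  define A where "A = \<bar>D\<bar> + 1"
  have A: "A > 0" "2 * A + D > 0" by (auto simp: A_def)
  have "2 * (c / A) * c + (c / A)^2 * D = c^2 * (2 * A + D) / A^2"
    using A by (simp add: field_simps power2_eq_square)
  then have "c^2 * (2 * A + D) / A^2 \<le> 0" using assms[of "c / A"] by simp
  then have "c^2 \<le> 0" using A by (simp add: divide_le_0_iff mult_le_0_iff)
  then show ?thesis by simp
qed

lemma symmetric_matrix_inner_swap:
  fixes M :: "real^'m^'m"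
  assumes "transpose M = M"
  shows "y \<bullet> (M *v z) = (M *v y) \<bullet> z"
  by (metis assms dot_lmul_matrix inner_commute transpose_transpose vector_transpose_matrix)

text \<open>A maximiser of the Rayleigh quotient is an eigenvector: comparing with \<open>y\<^sub>0 + t z\<close>
  shows that the linear term in \<open>t\<close> must vanish.\<close>

lemma invariant_subspace_has_unit_eigenvector:
  fixes M :: "real^'m^'m"
  assumes sym: "transpose M = M" and V: "subspace V" and inv: "\<forall>y\<in>V. M *v y \<in> V"
    and nontriv: "\<not> V \<subseteq> {0}"
  shows "\<exists>y\<in>V. norm y = 1 \<and> M *v y = (y \<bullet> (M *v y)) *\<^sub>R y"
proof -
  let ?q = "\<lambda>y. y \<bullet> (M *v y)"
  let ?K = "V \<inter> sphere 0 1"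
  obtain v where v: "v \<in> V" "v \<noteq> 0" using nontriv by auto
  then have "v /\<^sub>R norm v \<in> ?K" using V by (auto simp: subspace_scale)
  then have ne: "?K \<noteq> {}" by blast
  have compact: "compact ?K" using closed_subspace[OF V] by (simp add: closed_Int_compact)
  have "continuous_on ?K ?q"
    by (intro continuous_intros linear_continuous_on matrix_vector_mul_linear)
  then obtain y0 where y0: "y0 \<in> ?K" "\<And>y. y \<in> ?K \<Longrightarrow> ?q y \<le> ?q y0"
    using continuous_attains_sup[OF compact ne] by blast
  define \<mu> where "\<mu> = ?q y0"
  have y0V: "y0 \<in> V" and ny0: "norm y0 = 1" using y0(1) by auto
  have yy: "y0 \<bullet> y0 = 1" by (metis ny0 power2_norm_eq_inner power_one)
  have qle: "?q y \<le> \<mu> * (y \<bullet> y)" if "y \<in> V" for y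
  proof (cases "y = 0")
    case False
    have "y /\<^sub>R norm y \<in> ?K" using that False V by (auto simp: subspace_scale)
    then have "?q (y /\<^sub>R norm y) \<le> \<mu>" using y0(2) \<mu>_def by blast
    then have "?q y / (norm y)^2 \<le> \<mu>"
      by (simp add: matrix_vector_mult_scaleR inner_commute power2_eq_square divide_inverse mult_ac)
    then show ?thesis using False by (simp add: divide_le_eq power2_norm_eq_inner)
  qed simp
  have orth: "z \<bullet> (M *v y0 - \<mu> *\<^sub>R y0) = 0" if z: "z \<in> V" for z
  proof (rule linear_coeff_zero_if_quadratic_nonpos)
    fix t :: real
    have "y0 + t *\<^sub>R z \<in> V" using y0V z V by (simp add: subspace_add subspace_scale)
    then have h: "?q (y0 + t *\<^sub>R z) \<le> \<mu> * ((y0 + t *\<^sub>R z) \<bullet> (y0 + t *\<^sub>R z))" by (rule qle)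
    have e1: "?q (y0 + t *\<^sub>R z) = \<mu> + 2 * t * (z \<bullet> (M *v y0)) + t^2 * ?q z"
      using symmetric_matrix_inner_swap[OF sym, of y0 z] unfolding \<mu>_def
      by (simp add: matrix_vector_right_distrib matrix_vector_mult_scaleR inner_add_left
          inner_add_right inner_commute power2_eq_square algebra_simps)
    have e2: "(y0 + t *\<^sub>R z) \<bullet> (y0 + t *\<^sub>R z) = 1 + 2 * t * (z \<bullet> y0) + t^2 * (z \<bullet> z)"
      using yy by (simp add: inner_add_left inner_add_right inner_commute power2_eq_square
          algebra_simps)
    show "2 * t * (z \<bullet> (M *v y0 - \<mu> *\<^sub>R y0)) + t^2 * (?q z - \<mu> * (z \<bullet> z)) \<le> 0"
      using h unfolding e1 e2 by (simp add: inner_diff_right algebra_simps)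
  qed
  have "M *v y0 - \<mu> *\<^sub>R y0 \<in> V" using V inv y0V by (simp add: subspace_diff subspace_scale)
  from orth[OF this] have "M *v y0 = \<mu> *\<^sub>R y0" by simp
  then show ?thesis using y0V ny0 by (auto simp: \<mu>_def)
qed

lemma subspace_orthogonal_slice: "subspace V \<Longrightarrow> subspace {y \<in> V. y \<bullet> a = 0}"
  unfolding subspace_def by (auto simp: inner_add_left)

lemma dim_orthogonal_slice:
  fixes a :: "'a::euclidean_space"
  assumes V: "subspace V" and a: "a \<in> V" "norm a = 1"
  shows "dim V = dim {y \<in> V. y \<bullet> a = 0} + 1"
proof -
  let ?V' = "{y \<in> V. y \<bullet> a = 0}"
  have "a \<notin> span ?V'"
  proof
    assume "a \<in> span ?V'"
    then have "a \<in> ?V'" using subspace_orthogonal_slice[OF V] by (metis span_eq_iff)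
    then show False using a(2) by simp
  qed
  moreover have "span (insert a ?V') = V"
  proof (rule span_subspace)
    show "V \<subseteq> span (insert a ?V')"
    proof
      fix w assume w: "w \<in> V"
      have "w - (w \<bullet> a) *\<^sub>R a \<in> ?V'"
        using w a V by (simp add: subspace_diff subspace_scale inner_diff_left dot_square_norm)
      then have "(w - (w \<bullet> a) *\<^sub>R a) + (w \<bullet> a) *\<^sub>R a \<in> span (insert a ?V')"
        by (intro span_add) (simp_all add: span_base span_scale)
      then show "w \<in> span (insert a ?V')" by simp
    qed
  qed (use a V in auto)
  ultimately show ?thesis using dim_insert[of a ?V'] by (metis dim_span)
qed

lemma invariant_subspace_orthonormal_eigenbasis:
  fixes M :: "real^'m^'m"
  assumes sym: "transpose M = M"
  shows "subspace V \<Longrightarrow> (\<forall>y\<in>V. M *v y \<in> V) \<Longrightarrow> dim V = d \<Longrightarrow>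
    \<exists>e::nat \<Rightarrow> real^'m. (\<forall>i<d. e i \<in> V \<and> M *v e i = (e i \<bullet> (M *v e i)) *\<^sub>R e i) \<and>
        (\<forall>i<d. \<forall>j<d. e i \<bullet> e j = (if i = j then 1 else 0))"
proof (induction d arbitrary: V)
  case (Suc d)
  note V = Suc.prems
  have "\<not> V \<subseteq> {0}" using V(3) dim_eq_0 by (metis nat.simps(3))
  then obtain y0 where y0: "y0 \<in> V" "norm y0 = 1" "M *v y0 = (y0 \<bullet> (M *v y0)) *\<^sub>R y0"
    using invariant_subspace_has_unit_eigenvector[OF sym V(1,2)] by blast
  define V' where "V' = {y \<in> V. y \<bullet> y0 = 0}"
  have iV': "\<forall>y\<in>V'. M *v y \<in> V'"
  proof
    fix y assume "y \<in> V'"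
    moreover have "(M *v y) \<bullet> y0 = y \<bullet> (M *v y0)" using symmetric_matrix_inner_swap[OF sym, of y y0] by simp
    moreover obtain \<mu> where "M *v y0 = \<mu> *\<^sub>R y0" using y0(3) by blast
    ultimately show "M *v y \<in> V'" using V(2) by (simp add: V'_def)
  qed
  obtain e' where e': "\<forall>i<d. e' i \<in> V' \<and> M *v e' i = (e' i \<bullet> (M *v e' i)) *\<^sub>R e' i"
     "\<forall>i<d. \<forall>j<d. e' i \<bullet> e' j = (if i = j then 1 else 0)"
    using Suc.IH[OF subspace_orthogonal_slice[OF V(1)] iV'[unfolded V'_def]]
      dim_orthogonal_slice[OF V(1) y0(1,2)] V(3) unfolding V'_def by auto
  define e where "e i = (if i = 0 then y0 else e' (i - 1))" for i
  have "\<forall>i<Suc d. e i \<in> V \<and> M *v e i = (e i \<bullet> (M *v e i)) *\<^sub>R e i"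
    using y0 e'(1) by (auto simp: e_def V'_def)
  moreover have "\<forall>i<Suc d. \<forall>j<Suc d. e i \<bullet> e j = (if i = j then 1 else 0)"
  proof (intro allI impI)
    fix i j assume ij: "i < Suc d" "j < Suc d"
    have "e' l \<bullet> y0 = 0" if "l < d" for l using e'(1) that by (auto simp: V'_def)
    then show "e i \<bullet> e j = (if i = j then 1 else 0)"
      using ij e'(2)[rule_format, of "i - 1" "j - 1"] y0(2)
      by (cases "i = 0"; cases "j = 0") (auto simp: e_def inner_commute dot_square_norm)
  qed
  ultimately show ?case by blast
qed auto

lemma tangent_orthonormal_eigenbasis:
  fixes M :: "real^'m^'m" and x :: "real^'m"
  assumes sym: "transpose M = M" and Mx: "M *v x = 0" and nx: "norm x = 1"
  shows "\<exists>e::nat \<Rightarrow> real^'m.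
    (\<forall>i < CARD('m) - 1. e i \<bullet> x = 0 \<and> M *v e i = (e i \<bullet> (M *v e i)) *\<^sub>R e i) \<and>
    (\<forall>i < CARD('m) - 1. \<forall>j < CARD('m) - 1. e i \<bullet> e j = (if i = j then 1 else 0))"
proof -
  have "x \<noteq> 0" using nx by auto
  then have "dim {y. x \<bullet> y = 0} = CARD('m) - 1" using dim_hyperplane[of x] by simp
  moreover have "\<forall>y\<in>{y. x \<bullet> y = 0}. M *v y \<in> {y. x \<bullet> y = 0}"
    using symmetric_matrix_inner_swap[OF sym, of x] Mx by (simp add: inner_commute)
  ultimately show ?thesis
    using invariant_subspace_orthonormal_eigenbasis[OF sym subspace_hyperplane]
    by (auto simp: inner_commute)
qed

section \<open>\<open>\<sigma>\<^sub>k\<close> through traces of matrix powers\<close>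

fun mat_power :: "real^'m^'m \<Rightarrow> nat \<Rightarrow> real^'m^'m" where
  "mat_power M 0 = mat 1"
| "mat_power M (Suc j) = M ** mat_power M j"

lemma matrix_add_rdistrib: "((A + B) ** C) = (A ** C) + (B ** (C::real^'k^'m)::real^'k^'n)"
  by (vector matrix_matrix_mult_def sum.distrib[symmetric] field_simps)

lemma transpose_add: "transpose (A + B) = transpose A + transpose (B::real^'n^'m)"
  by (simp add: transpose_def vec_eq_iff)

lemma transpose_diff: "transpose (A - B) = transpose A - transpose (B::real^'n^'m)"
  by (simp add: transpose_def vec_eq_iff)

lemma bounded_bilinear_matrix_mult: "bounded_bilinear (\<lambda>(A::real^'m^'m) (C::real^'m^'m). A ** C)"
proof -
  have "bilinear (\<lambda>(A::real^'m^'m) (C::real^'m^'m). A ** C)"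
    unfolding bilinear_def
    by (auto intro!: linearI simp: matrix_add_ldistrib matrix_add_rdistrib matrix_scalar_ac
          scalar_matrix_assoc[symmetric])
  then show ?thesis by (simp add: bilinear_conv_bounded_bilinear)
qed

lemma bounded_linear_trace: "bounded_linear (trace :: real^'m^'m \<Rightarrow> real)"
proof -
  have "linear (trace :: real^'m^'m \<Rightarrow> real)"
    by (auto intro!: linearI simp: trace_def sum_distrib_left sum.distrib)
  then show ?thesis by (simp add: linear_conv_bounded_linear)
qed

lemma mat_power_eigenvector:
  assumes "M *v v = l *\<^sub>R v"
  shows "mat_power M j *v v = (l ^ j) *\<^sub>R v"
  using assms
  by (induction j) (simp_all add: matrix_vector_mul_assoc[symmetric] matrix_vector_mult_scaleR)

lemma mat_power_kernel:
  assumes "M *v x = 0" "j > 0"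
  shows "mat_power M j *v x = 0"
proof -
  obtain j' where "j = Suc j'" using assms(2) gr0_implies_Suc by blast
  have "mat_power M j' *v (M *v x) = 0" using assms(1) by simp
  moreover have "mat_power M (Suc j') = mat_power M j' ** M"
    by (induction j') (simp_all, metis matrix_mul_assoc)
  ultimately show ?thesis using \<open>j = Suc j'\<close> by (simp add: matrix_vector_mul_assoc)
qed

definition tangent_onb :: "real^'m \<Rightarrow> (nat \<Rightarrow> real^'m) \<Rightarrow> bool" where
  "tangent_onb x e \<longleftrightarrow> norm x = 1 \<and> (\<forall>i < CARD('m) - 1. e i \<bullet> x = 0) \<and>
      (\<forall>i < CARD('m) - 1. \<forall>j < CARD('m) - 1. e i \<bullet> e j = (if i = j then 1 else 0))"

lemma orthonormal_family_expansion:
  fixes f :: "nat \<Rightarrow> real^'m"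
  assumes ortho: "\<And>i j. i < CARD('m) \<Longrightarrow> j < CARD('m) \<Longrightarrow> f i \<bullet> f j = (if i = j then 1 else 0)"
  shows "z = (\<Sum>l<CARD('m). (z \<bullet> f l) *\<^sub>R f l)"
proof (rule ccontr)
  let ?N = "CARD('m)"
  define w where "w = z - (\<Sum>l<?N. (z \<bullet> f l) *\<^sub>R f l)"
  assume "z \<noteq> (\<Sum>l<?N. (z \<bullet> f l) *\<^sub>R f l)"
  then have "w \<noteq> 0" by (simp add: w_def)
  have wf: "w \<bullet> f j = 0" if "j < ?N" for j
  proof -
    have "(\<Sum>l<?N. (z \<bullet> f l) *\<^sub>R f l) \<bullet> f j = (\<Sum>l<?N. if l = j then z \<bullet> f j else 0)"
      unfolding inner_sum_left using ortho that by (intro sum.cong) auto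
    then show ?thesis using that by (simp add: w_def inner_diff_left)
  qed
  have "inj_on f {..<?N}"
    by (rule inj_onI) (metis lessThan_iff ortho zero_neq_one)
  moreover have "w \<notin> f ` {..<?N}" using wf ortho by force
  ultimately have card: "card (insert w (f ` {..<?N})) = Suc ?N" by (simp add: card_image)
  have "pairwise orthogonal (insert w (f ` {..<?N}))"
    unfolding pairwise_def orthogonal_def using wf ortho by (auto simp: inner_commute)
  moreover have "0 \<notin> insert w (f ` {..<?N})" using \<open>w \<noteq> 0\<close> ortho by force
  ultimately have "independent (insert w (f ` {..<?N}))"
    using pairwise_orthogonal_independent by blast
  then have "card (insert w (f ` {..<?N})) \<le> DIM(real^'m)" using independent_bound by blast
  then show False using card by simp
qed

lemma trace_eq_sum_orthonormal_family:
  fixes A :: "real^'m^'m" and f :: "nat \<Rightarrow> real^'m"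
  assumes ortho: "\<And>i j. i < CARD('m) \<Longrightarrow> j < CARD('m) \<Longrightarrow> f i \<bullet> f j = (if i = j then 1 else 0)"
  shows "trace A = (\<Sum>l<CARD('m). f l \<bullet> (A *v f l))"
proof -
  have delta: "(\<Sum>l<CARD('m). f l $ p * f l $ q) = (if p = q then 1 else 0)" for p q
  proof -
    have "axis q (1::real) $ p = (\<Sum>l<CARD('m). (axis q 1 \<bullet> f l) * f l $ p)"
      using arg_cong[OF orthonormal_family_expansion[OF ortho, of "axis q 1"], of "\<lambda>v. v $ p"]
      by (simp only: sum_component vector_scaleR_component real_scaleR_def)
    also have "\<dots> = (\<Sum>l<CARD('m). f l $ p * f l $ q)"
      by (intro sum.cong refl) (simp add: inner_axis')
    finally show ?thesis by (simp add: axis_def)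
  qed
  have "(\<Sum>l<CARD('m). f l \<bullet> (A *v f l))
      = (\<Sum>l<CARD('m). \<Sum>p\<in>UNIV. \<Sum>q\<in>UNIV. A$p$q * (f l $ p * f l $ q))"
    unfolding inner_vec_def matrix_vector_mult_def inner_real_def
    by (simp add: sum_distrib_left mult.left_commute)
  also have "\<dots> = (\<Sum>p\<in>UNIV. \<Sum>q\<in>UNIV. A$p$q * (\<Sum>l<CARD('m). f l $ p * f l $ q))"
    by (subst sum.swap) (simp add: sum_distrib_left sum.swap[of _ "{..<CARD('m)}"])
  also have "\<dots> = trace A" by (simp add: delta trace_def if_distrib cong: if_cong)
  finally show ?thesis by simp
qed

definition tangent_frame :: "real^'m \<Rightarrow> (nat \<Rightarrow> real^'m) \<Rightarrow> nat \<Rightarrow> real^'m" where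
  "tangent_frame x e l = (if l < CARD('m) - 1 then e l else x)"

lemma trace_tangent_onb:
  fixes A :: "real^'m^'m"
  assumes onb: "tangent_onb x e"
  shows "trace A = (\<Sum>i<CARD('m) - 1. e i \<bullet> (A *v e i)) + x \<bullet> (A *v x)"
proof -
  let ?n = "CARD('m) - 1" and ?f = "tangent_frame x e"
  have N: "{..<CARD('m)} = {..<Suc ?n}" by simp
  have "x \<bullet> x = 1" using onb by (simp add: tangent_onb_def dot_square_norm)
  then have "?f i \<bullet> ?f j = (if i = j then 1 else 0)" if "i < CARD('m)" "j < CARD('m)" for i j
    using onb that by (auto simp: tangent_frame_def tangent_onb_def inner_commute)
  then have "trace A = (\<Sum>l<Suc ?n. ?f l \<bullet> (A *v ?f l))"
    unfolding N[symmetric] by (rule trace_eq_sum_orthonormal_family)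
  also have "\<dots> = (\<Sum>i<?n. e i \<bullet> (A *v e i)) + x \<bullet> (A *v x)"
    by (simp only: sum.lessThan_Suc) (simp add: tangent_frame_def)
  finally show ?thesis .
qed

lemma trace_mat_power_eq_power_sum:
  fixes M :: "real^'m^'m"
  assumes onb: "tangent_onb x e" and Mx: "M *v x = 0"
    and eig: "\<And>i. i < CARD('m) - 1 \<Longrightarrow> M *v e i = lam i *\<^sub>R e i" and j: "j > 0"
  shows "trace (mat_power M j) = power_sum (CARD('m) - 1) lam j"
proof -
  have ee: "e i \<bullet> e i = 1" if "i < CARD('m) - 1" for i using onb that by (auto simp: tangent_onb_def)
  have "trace (mat_power M j) = (\<Sum>i<CARD('m) - 1. e i \<bullet> (mat_power M j *v e i)) + x \<bullet> (mat_power M j *v x)"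
    by (rule trace_tangent_onb[OF onb])
  also have "\<dots> = (\<Sum>i<CARD('m) - 1. lam i ^ j)"
    using mat_power_eigenvector[OF eig] mat_power_kernel[OF Mx j] ee by simp
  finally show ?thesis by (simp add: power_sum_def)
qed

lemma esym_tan_eigenvalues_eq_esym_newton_traces:
  fixes M :: "real^'m^'m"
  assumes Mx: "M *v x = 0" and nx: "norm x = 1" and eig: "tan_eigenvalues x M lam"
  shows "esym k (CARD('m) - 1) lam = esym_newton k (\<lambda>j. trace (mat_power M j))"
proof -
  obtain e where e: "\<forall>i < CARD('m) - 1. e i \<bullet> x = 0 \<and> M *v e i = lam i *\<^sub>R e i"
      "\<forall>i < CARD('m) - 1. \<forall>j < CARD('m) - 1. e i \<bullet> e j = (if i = j then 1 else 0)"
    using eig unfolding tan_eigenvalues_def by blast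
  have onb: "tangent_onb x e" using e nx by (simp add: tangent_onb_def)
  have "esym k (CARD('m) - 1) lam = esym_newton k (power_sum (CARD('m) - 1) lam)"
    by (rule esym_eq_esym_newton)
  also have "\<dots> = esym_newton k (\<lambda>j. trace (mat_power M j))"
  proof (rule esym_newton_cong)
    fix j :: nat assume "j > 0"
    then show "power_sum (CARD('m) - 1) lam j = trace (mat_power M j)"
      using trace_mat_power_eq_power_sum[OF onb Mx, of lam j] e by simp
  qed
  finally show ?thesis .
qed

text \<open>In particular \<open>\<sigma>\<^sub>k\<close> does not depend on the choice of eigenvalue list, so the
  definite description in \<open>sigma_tan\<close> is proper.\<close>

lemma sigma_tan_eq_esym:
  fixes M :: "real^'m^'m"
  assumes Mx: "M *v x = 0" and nx: "norm x = 1"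
    and eig: "tan_eigenvalues x M lam"
  shows "sigma_tan k x M = esym k (CARD('m) - 1) lam"
  unfolding sigma_tan_def
proof (rule the_equality)
  show "\<exists>lam'. tan_eigenvalues x M lam' \<and> esym k (CARD('m) - 1) lam = esym k (CARD('m) - 1) lam'"
    using eig by blast
  show "s = esym k (CARD('m) - 1) lam"
    if "\<exists>lam'. tan_eigenvalues x M lam' \<and> s = esym k (CARD('m) - 1) lam'" for s
    using that esym_tan_eigenvalues_eq_esym_newton_traces[OF Mx nx] eig by metis
qed

lemma sigma_tan_eq_esym_newton_traces:
  fixes M :: "real^'m^'m"
  assumes sym: "transpose M = M" and Mx: "M *v x = 0" and nx: "norm x = 1"
  shows "sigma_tan k x M = esym_newton k (\<lambda>j. trace (mat_power M j))"
proof -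
  obtain e where e: "\<forall>i < CARD('m) - 1. e i \<bullet> x = 0 \<and> M *v e i = (e i \<bullet> (M *v e i)) *\<^sub>R e i"
      "\<forall>i < CARD('m) - 1. \<forall>j < CARD('m) - 1. e i \<bullet> e j = (if i = j then 1 else 0)"
    using tangent_orthonormal_eigenbasis[OF sym Mx nx] by blast
  then have "tan_eigenvalues x M (\<lambda>i. e i \<bullet> (M *v e i))"
    unfolding tan_eigenvalues_def by blast
  then show ?thesis
    using sigma_tan_eq_esym[OF Mx nx] esym_tan_eigenvalues_eq_esym_newton_traces[OF Mx nx] by metis
qed

fun mat_power_deriv :: "real^'m^'m \<Rightarrow> real^'m^'m \<Rightarrow> nat \<Rightarrow> real^'m^'m" where
  "mat_power_deriv B W 0 = 0"
| "mat_power_deriv B W (Suc j) = B ** mat_power_deriv B W j + W ** mat_power B j"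

lemma has_vector_derivative_mat_power:
  "((\<lambda>t::real. mat_power (B + t *\<^sub>R W) j) has_vector_derivative mat_power_deriv B W j) (at 0)"
proof (induction j)
  case 0 then show ?case by simp
next
  case (Suc j)
  have f: "((\<lambda>t::real. B + t *\<^sub>R W) has_vector_derivative W) (at 0)"
    by (auto intro!: derivative_eq_intros)
  show ?case
    using bounded_bilinear.has_vector_derivative[OF bounded_bilinear_matrix_mult f Suc] by simp
qed

lemma has_real_derivative_trace_mat_power:
  "((\<lambda>t::real. trace (mat_power (B + t *\<^sub>R W) j)) has_real_derivative trace (mat_power_deriv B W j)) (at 0)"
  using bounded_linear.has_vector_derivative[OF bounded_linear_trace has_vector_derivative_mat_power]
  by (simp add: has_real_derivative_iff_has_vector_derivative)

lemma mat_power_deriv_eigenvector: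
  fixes B W :: "real^'m^'m"
  assumes symB: "transpose B = B" and eig: "B *v v = l *\<^sub>R v"
  shows "v \<bullet> (mat_power_deriv B W j *v v) = real j * l ^ (j - 1) * (v \<bullet> (W *v v))"
proof (induction j)
  case (Suc j)
  have "v \<bullet> (mat_power_deriv B W (Suc j) *v v)
      = v \<bullet> (B *v (mat_power_deriv B W j *v v)) + v \<bullet> (W *v (mat_power B j *v v))"
    by (simp add: matrix_vector_mult_add_rdistrib matrix_vector_mul_assoc[symmetric] inner_add_right)
  also have "v \<bullet> (B *v (mat_power_deriv B W j *v v)) = l * (v \<bullet> (mat_power_deriv B W j *v v))"
    using symmetric_matrix_inner_swap[OF symB, of v] eig by simp
  also have "v \<bullet> (W *v (mat_power B j *v v)) = l ^ j * (v \<bullet> (W *v v))"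
    using mat_power_eigenvector[OF eig, of j] by (simp add: matrix_vector_mult_scaleR)
  also have "l * (v \<bullet> (mat_power_deriv B W j *v v)) + l ^ j * (v \<bullet> (W *v v))
      = real (Suc j) * l ^ (Suc j - 1) * (v \<bullet> (W *v v))"
    using Suc.IH by (cases j) (simp_all add: algebra_simps)
  finally show ?case .
qed simp

lemma mat_power_deriv_kernel:
  fixes B W :: "real^'m^'m"
  assumes symB: "transpose B = B" and Bx: "B *v x = 0" and Wx: "W *v x = 0"
  shows "x \<bullet> (mat_power_deriv B W j *v x) = 0"
proof (cases j)
  case (Suc j')
  have "x \<bullet> (B *v (mat_power_deriv B W j' *v x)) = 0"
    using symmetric_matrix_inner_swap[OF symB, of x] Bx by simp
  moreover have "x \<bullet> (W *v (mat_power B j' *v x)) = 0"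
    using Wx mat_power_kernel[OF Bx, of j'] by (cases j') simp_all
  ultimately show ?thesis
    using Suc by (simp add: matrix_vector_mult_add_rdistrib matrix_vector_mul_assoc[symmetric]
        inner_add_right)
qed simp

text \<open>First-order perturbation theory: to first order, the power sums of the eigenvalues of
  \<open>B + t W\<close> move like those of \<open>\<lambda>\<^sub>i + t W\<^sub>i\<^sub>i\<close>, the diagonal taken in an eigenbasis of \<open>B\<close>.\<close>

lemma has_real_derivative_trace_mat_power_tangent:
  fixes B W :: "real^'m^'m"
  assumes symB: "transpose B = B" and Bx: "B *v x = 0" and Wx: "W *v x = 0"
    and onb: "tangent_onb x e" and eig: "\<And>i. i < CARD('m) - 1 \<Longrightarrow> B *v e i = lam i *\<^sub>R e i"
  shows "((\<lambda>t. trace (mat_power (B + t *\<^sub>R W) j)) has_real_derivative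
      real j * (\<Sum>i<CARD('m) - 1. lam i ^ (j - 1) * (e i \<bullet> (W *v e i)))) (at 0)"
proof -
  have "trace (mat_power_deriv B W j)
      = (\<Sum>i<CARD('m) - 1. e i \<bullet> (mat_power_deriv B W j *v e i)) + x \<bullet> (mat_power_deriv B W j *v x)"
    by (rule trace_tangent_onb[OF onb])
  also have "\<dots> = real j * (\<Sum>i<CARD('m) - 1. lam i ^ (j - 1) * (e i \<bullet> (W *v e i)))"
    using mat_power_deriv_eigenvector[OF symB eig] mat_power_deriv_kernel[OF symB Bx Wx]
    by (simp add: sum_distrib_left mult.assoc)
  finally show ?thesis using has_real_derivative_trace_mat_power[of B W j] by simp
qed

lemma has_real_derivative_power_sum_perturbation:
  "((\<lambda>t. power_sum n (\<lambda>i. lam i + t * d i) j) has_real_derivative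
      real j * (\<Sum>i<n. lam i ^ (j - 1) * d i)) (at 0)"
proof -
  have "((\<lambda>t. (lam i + t * d i) ^ j) has_real_derivative real j * lam i ^ (j - 1) * d i) (at 0)" for i
  proof -
    have "((\<lambda>t. lam i + t * d i) has_real_derivative d i) (at 0)"
      by (auto intro!: derivative_eq_intros)
    from DERIV_power[OF this, of j] show ?thesis by (simp add: mult_ac)
  qed
  then show ?thesis
    unfolding power_sum_def sum_distrib_left by (auto intro!: DERIV_sum simp: mult.assoc)
qed

lemma sigma_tan_directional_derivative:
  fixes B W :: "real^'m^'m" and x :: "real^'m"
  assumes symB: "transpose B = B" and symW: "transpose W = W"
    and Bx: "B *v x = 0" and Wx: "W *v x = 0" and onb: "tangent_onb x e"
    and eig: "\<And>i. i < CARD('m) - 1 \<Longrightarrow> B *v e i = lam i *\<^sub>R e i"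
  shows "\<exists>D. ((\<lambda>t. sigma_tan k x (B + t *\<^sub>R W)) has_real_derivative D) (at 0) \<and>
    ((\<lambda>t. esym k (CARD('m) - 1) (\<lambda>i. lam i + t * (e i \<bullet> (W *v e i)))) has_real_derivative D) (at 0)"
proof -
  let ?n = "CARD('m) - 1"
  define a where "a j = power_sum ?n lam j" for j
  define b where "b j = real j * (\<Sum>i<?n. lam i ^ (j - 1) * (e i \<bullet> (W *v e i)))" for j
  have nx: "norm x = 1" using onb by (simp add: tangent_onb_def)
  have "transpose (B + t *\<^sub>R W) = B + t *\<^sub>R W" for t
    using symB symW by (simp add: transpose_add transpose_scalar)
  moreover have "(B + t *\<^sub>R W) *v x = 0" for t
    using Bx Wx by (simp add: matrix_vector_mult_add_rdistrib scaleR_matrix_vector_assoc[symmetric])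
  ultimately have "(\<lambda>t. sigma_tan k x (B + t *\<^sub>R W))
      = (\<lambda>t. esym_newton k (\<lambda>j. trace (mat_power (B + t *\<^sub>R W) j)))"
    using sigma_tan_eq_esym_newton_traces[OF _ _ nx] by blast
  moreover have "((\<lambda>t. esym_newton k (\<lambda>j. trace (mat_power (B + t *\<^sub>R W) j)))
      has_real_derivative esym_newton_deriv k a b) (at 0)"
    using has_real_derivative_trace_mat_power_tangent[OF symB Bx Wx onb eig]
      trace_mat_power_eq_power_sum[OF onb Bx eig]
    by (intro has_real_derivative_esym_newton) (simp_all add: a_def b_def)
  moreover have "((\<lambda>t. esym k ?n (\<lambda>i. lam i + t * (e i \<bullet> (W *v e i))))
      has_real_derivative esym_newton_deriv k a b) (at 0)"
    unfolding esym_eq_esym_newton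
  proof (rule has_real_derivative_esym_newton)
    show "((\<lambda>t. power_sum ?n (\<lambda>i. lam i + t * (e i \<bullet> (W *v e i))) j) has_real_derivative b j) (at 0)"
      for j unfolding b_def by (rule has_real_derivative_power_sum_perturbation)
  qed (simp add: a_def)
  ultimately show ?thesis by auto
qed

section \<open>Ellipticity of \<open>F = \<sigma>\<^sub>k\<^sup>1\<^sup>/\<^sup>k\<close>\<close>

lemma Flin_eq_sigma_tan_derivative:
  assumes D: "((\<lambda>t. sigma_tan k x (B + t *\<^sub>R W)) has_real_derivative D) (at 0)"
    and pos: "sigma_tan k x B > 0" and k: "k \<ge> 1"
  shows "Flin k x B W = Fk k x B * (D / (real k * sigma_tan k x B))"
proof -
  let ?S = "sigma_tan k x B"
  have "((\<lambda>t. sigma_tan k x (B + t *\<^sub>R W) powr (1 / real k)) has_real_derivative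
      ?S powr (1 / real k) * (0 * ln ?S + D * (1 / real k) / ?S)) (at 0)"
    using DERIV_powr[OF D, of "\<lambda>_. 1 / real k" 0] pos by simp
  then show ?thesis
    unfolding Flin_def Fk_def by (simp add: DERIV_imp_deriv)
qed

text \<open>The key inequality \<open>s F\<^sup>i\<^sup>j(c B + G)\<^sub>i\<^sub>j \<le> s c F(B)\<close> for \<open>s G \<le> 0\<close> on the tangent space:
  monotonicity of \<open>\<sigma>\<^sub>k\<close> in the eigenvalues plus Euler's relation \<open>F\<^sup>i\<^sup>j B\<^sub>i\<^sub>j = F(B)\<close>.\<close>

lemma Flin_sign:
  fixes B G :: "real^'m^'m" and x :: "real^'m"
  assumes symB: "transpose B = B" and symG: "transpose G = G"
    and Bx: "B *v x = 0" and Gx: "G *v x = 0" and nx: "norm x = 1"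
    and k: "1 \<le> k" "k \<le> CARD('m) - 1"
    and Bpos: "\<And>y. y \<bullet> x = 0 \<Longrightarrow> y \<noteq> 0 \<Longrightarrow> y \<bullet> (B *v y) > 0"
    and s: "s = 1 \<or> s = -1"
    and Gs: "\<And>y. y \<bullet> x = 0 \<Longrightarrow> s * (y \<bullet> (G *v y)) \<le> 0"
  shows "s * Flin k x B (c *\<^sub>R B + G) \<le> s * (c * Fk k x B)"
proof -
  let ?n = "CARD('m) - 1" and ?W = "c *\<^sub>R B + G"
  obtain e where e: "\<forall>i < ?n. e i \<bullet> x = 0 \<and> B *v e i = (e i \<bullet> (B *v e i)) *\<^sub>R e i"
      "\<forall>i < ?n. \<forall>j < ?n. e i \<bullet> e j = (if i = j then 1 else 0)"
    using tangent_orthonormal_eigenbasis[OF symB Bx nx] by blast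
  define lam where "lam i = e i \<bullet> (B *v e i)" for i
  define g where "g i = e i \<bullet> (G *v e i)" for i
  have onb: "tangent_onb x e" using e nx by (simp add: tangent_onb_def)
  have eig: "\<And>i. i < ?n \<Longrightarrow> B *v e i = lam i *\<^sub>R e i" using e by (simp add: lam_def)
  have lam_pos: "lam i > 0" if "i < ?n" for i
  proof -
    have "e i \<noteq> 0" using e(2) that by (metis inner_zero_left zero_neq_one)
    then show ?thesis using Bpos[of "e i"] e(1) that by (simp add: lam_def)
  qed
  have g_sign: "s * g i \<le> 0" if "i < ?n" for i using Gs[of "e i"] e(1) that by (simp add: g_def)
  have "transpose ?W = ?W" using symB symG by (simp add: transpose_add transpose_scalar)
  moreover have "?W *v x = 0"
    using Bx Gx by (simp add: matrix_vector_mult_add_rdistrib scaleR_matrix_vector_assoc[symmetric])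
  moreover have "e i \<bullet> (?W *v e i) = c * lam i + g i" for i
    by (simp add: matrix_vector_mult_add_rdistrib scaleR_matrix_vector_assoc[symmetric]
        inner_add_right lam_def g_def)
  ultimately obtain D where
    D_sigma: "((\<lambda>t. sigma_tan k x (B + t *\<^sub>R ?W)) has_real_derivative D) (at 0)" and
    D_esym: "((\<lambda>t. esym k ?n (\<lambda>i. lam i + t * (c * lam i + g i))) has_real_derivative D) (at 0)"
    using sigma_tan_directional_derivative[OF symB _ Bx _ onb eig, of ?W k] by auto
  have "tan_eigenvalues x B lam" unfolding tan_eigenvalues_def using e eig by blast
  then have sigma: "sigma_tan k x B = esym k ?n lam" by (rule sigma_tan_eq_esym[OF Bx nx])
  have S_pos: "esym k ?n lam > 0" using lam_pos k(2) by (rule esym_pos)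
  have "s * (D / (real k * esym k ?n lam)) = (s * D) / (real k * esym k ?n lam)" by simp
  also have "\<dots> \<le> (s * (real k * c * esym k ?n lam)) / (real k * esym k ?n lam)"
    using esym_perturbation_derivative_le[OF lam_pos s g_sign D_esym] k(1) S_pos
    by (intro divide_right_mono) auto
  also have "\<dots> = s * c" using k(1) S_pos by simp
  finally have "s * (D / (real k * esym k ?n lam)) \<le> s * c" .
  then have "Fk k x B * (s * (D / (real k * esym k ?n lam))) \<le> Fk k x B * (s * c)"
    by (rule mult_left_mono) (simp add: Fk_def)
  moreover have "Flin k x B ?W = Fk k x B * (D / (real k * esym k ?n lam))"
    using Flin_eq_sigma_tan_derivative[OF D_sigma _ k(1)] S_pos sigma by simp
  ultimately show ?thesis by (simp add: mult_ac)
qed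

section \<open>Calculus on the sphere\<close>

lemma Ck_on_subset: "Ck_on m S f \<Longrightarrow> T \<subseteq> S \<Longrightarrow> Ck_on m T f"
  by (induction m arbitrary: f) (auto intro: continuous_on_subset)

lemma Ck2_onD:
  assumes "Ck_on 2 S f"
  shows "\<And>x. x \<in> S \<Longrightarrow> f differentiable (at x)"
    and "\<And>x i. x \<in> S \<Longrightarrow> i \<in> Basis \<Longrightarrow> (\<lambda>y. frechet_derivative f (at y) i) differentiable (at x)"
    and "\<And>i j. i \<in> Basis \<Longrightarrow> j \<in> Basis \<Longrightarrow>
           continuous_on S (\<lambda>y. frechet_derivative (\<lambda>z. frechet_derivative f (at z) i) (at y) j)"
  using assms by (auto simp: numeral_2_eq_2)

lemma Ck2_on_continuous:
  assumes "Ck_on 2 S f"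
  shows "continuous_on S f"
  using Ck2_onD(1)[OF assms] differentiable_imp_continuous_within
  by (blast intro: continuous_at_imp_continuous_on)

lemma has_real_derivative_comp_frechet_derivative:
  fixes f :: "'a::real_normed_vector \<Rightarrow> real"
  assumes g: "(g has_vector_derivative g') (at t)" and f: "f differentiable (at (g t))"
  shows "((\<lambda>t. f (g t)) has_real_derivative frechet_derivative f (at (g t)) g') (at t)"
proof -
  let ?D = "frechet_derivative f (at (g t))"
  have h: "(f has_derivative ?D) (at (g t))" using f frechet_derivative_works by blast
  have "((\<lambda>t. f (g t)) has_derivative (\<lambda>s. ?D (s *\<^sub>R g'))) (at t)"
    using has_derivative_compose[OF g[unfolded has_vector_derivative_def] h] by simp
  moreover have "(\<lambda>s. ?D (s *\<^sub>R g')) = (\<lambda>s. ?D g' * s)"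
    using linear_scale[OF has_derivative_linear[OF h]] by (auto simp: mult.commute)
  ultimately show ?thesis by (simp add: has_field_derivative_def)
qed

lemma has_real_derivative_along_line:
  fixes f :: "'a::real_normed_vector \<Rightarrow> real"
  assumes "f differentiable (at (x + s *\<^sub>R a))"
  shows "((\<lambda>t. f (x + t *\<^sub>R a)) has_real_derivative frechet_derivative f (at (x + s *\<^sub>R a)) a) (at s)"
proof -
  have "((\<lambda>t. x + t *\<^sub>R a) has_vector_derivative a) (at s)" by (auto intro!: derivative_eq_intros)
  from has_real_derivative_comp_frechet_derivative[OF this] assms show ?thesis by simp
qed

lemma second_difference_mean_value:
  fixes f :: "'a::euclidean_space \<Rightarrow> real"
  assumes S: "Ck_on 2 S f" and cb: "cball x (2 * h) \<subseteq> S" and h: "h > 0"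
    and a: "a \<in> Basis" and b: "b \<in> Basis"
  shows "\<exists>\<xi>. dist \<xi> x \<le> 2 * h \<and>
     f (x + h *\<^sub>R b + h *\<^sub>R a) - f (x + h *\<^sub>R a) - f (x + h *\<^sub>R b) + f x
       = h * (h * frechet_derivative (\<lambda>z. frechet_derivative f (at z) a) (at \<xi>) b)"
proof -
  let ?pa = "\<lambda>z. frechet_derivative f (at z) a"
  have near: "dist (x + s *\<^sub>R a + t *\<^sub>R b) x \<le> 2 * h"
    if "0 \<le> s" "s \<le> h" "0 \<le> t" "t \<le> h" for s t
  proof -
    have "norm (s *\<^sub>R a + t *\<^sub>R b) \<le> norm (s *\<^sub>R a) + norm (t *\<^sub>R b)" by (rule norm_triangle_ineq)
    also have "\<dots> \<le> 2 * h" using that a b by simp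
    finally show ?thesis by (simp add: dist_norm add.assoc)
  qed
  have inS: "x + s *\<^sub>R a + t *\<^sub>R b \<in> S" if "0 \<le> s" "s \<le> h" "0 \<le> t" "t \<le> h" for s t
    using near[OF that] cb by (auto simp: dist_commute)
  define g where "g s = f (x + h *\<^sub>R b + s *\<^sub>R a) - f (x + s *\<^sub>R a)" for s
  have gd: "(g has_real_derivative (?pa (x + h *\<^sub>R b + s *\<^sub>R a) - ?pa (x + s *\<^sub>R a))) (at s)"
    if "0 \<le> s" "s \<le> h" for s
  proof -
    have d1: "f differentiable (at (x + h *\<^sub>R b + s *\<^sub>R a))"
      using Ck2_onD(1)[OF S] inS[of s h] that h by (simp add: add_ac)
    have d2: "f differentiable (at (x + s *\<^sub>R a))"
      using Ck2_onD(1)[OF S] inS[of s 0] that h by simp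
    show ?thesis unfolding g_def[abs_def]
      by (rule DERIV_diff[OF has_real_derivative_along_line[OF d1] has_real_derivative_along_line[OF d2]])
  qed
  obtain s1 where s1: "0 < s1" "s1 < h"
      "g h - g 0 = (h - 0) * (?pa (x + h *\<^sub>R b + s1 *\<^sub>R a) - ?pa (x + s1 *\<^sub>R a))"
    using MVT2[OF h, of g "\<lambda>s. ?pa (x + h *\<^sub>R b + s *\<^sub>R a) - ?pa (x + s *\<^sub>R a)"] gd by auto
  define \<psi> where "\<psi> t = ?pa (x + s1 *\<^sub>R a + t *\<^sub>R b)" for t
  have \<psi>d: "(\<psi> has_real_derivative frechet_derivative ?pa (at (x + s1 *\<^sub>R a + t *\<^sub>R b)) b) (at t)"
    if "0 \<le> t" "t \<le> h" for t
  proof -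
    have "?pa differentiable (at (x + s1 *\<^sub>R a + t *\<^sub>R b))"
      using Ck2_onD(2)[OF S _ a] inS[of s1 t] that s1 by simp
    then show ?thesis unfolding \<psi>_def[abs_def] by (rule has_real_derivative_along_line)
  qed
  obtain t1 where t1: "0 < t1" "t1 < h"
      "\<psi> h - \<psi> 0 = (h - 0) * frechet_derivative ?pa (at (x + s1 *\<^sub>R a + t1 *\<^sub>R b)) b"
    using MVT2[OF h, of \<psi> "\<lambda>t. frechet_derivative ?pa (at (x + s1 *\<^sub>R a + t *\<^sub>R b)) b"] \<psi>d by auto
  define \<xi> where "\<xi> = x + s1 *\<^sub>R a + t1 *\<^sub>R b"
  have "dist \<xi> x \<le> 2 * h" using near s1 t1 by (simp add: \<xi>_def)
  moreover have "\<psi> h - \<psi> 0 = ?pa (x + h *\<^sub>R b + s1 *\<^sub>R a) - ?pa (x + s1 *\<^sub>R a)"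
    by (simp add: \<psi>_def add_ac)
  moreover have "g h - g 0 = f (x + h *\<^sub>R b + h *\<^sub>R a) - f (x + h *\<^sub>R a) - f (x + h *\<^sub>R b) + f x"
    by (simp add: g_def)
  ultimately show ?thesis using s1(3) t1(3) \<xi>_def by auto
qed

lemma eq_if_continuous_at_and_agree_nearby:
  fixes f g :: "'a::metric_space \<Rightarrow> real"
  assumes f: "isCont f x" and g: "isCont g x"
    and near: "\<And>\<delta>. \<delta> > 0 \<Longrightarrow> \<exists>\<xi> \<eta>. dist \<xi> x < \<delta> \<and> dist \<eta> x < \<delta> \<and> f \<xi> = g \<eta>"
  shows "f x = g x"
proof (rule ccontr)
  assume "f x \<noteq> g x"
  then have \<epsilon>: "\<bar>f x - g x\<bar> / 2 > 0" by simp
  obtain d1 where d1: "d1 > 0" "\<And>z. dist z x < d1 \<Longrightarrow> dist (f z) (f x) < \<bar>f x - g x\<bar> / 2"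
    using f \<epsilon> unfolding continuous_at_eps_delta by blast
  obtain d2 where d2: "d2 > 0" "\<And>z. dist z x < d2 \<Longrightarrow> dist (g z) (g x) < \<bar>f x - g x\<bar> / 2"
    using g \<epsilon> unfolding continuous_at_eps_delta by blast
  obtain \<xi> \<eta> where "dist \<xi> x < min d1 d2" "dist \<eta> x < min d1 d2" "f \<xi> = g \<eta>"
    using near[of "min d1 d2"] d1(1) d2(1) by auto
  then show False using d1(2)[of \<xi>] d2(2)[of \<eta>] by (auto simp: dist_real_def abs_real_def split: if_splits)
qed

lemma frechet_derivative_partials_commute:
  fixes f :: "'a::euclidean_space \<Rightarrow> real"
  assumes S: "Ck_on 2 S f" and oS: "open S" and x: "x \<in> S"
    and a: "a \<in> Basis" and b: "b \<in> Basis"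
  shows "frechet_derivative (\<lambda>z. frechet_derivative f (at z) a) (at x) b
       = frechet_derivative (\<lambda>z. frechet_derivative f (at z) b) (at x) a"
proof -
  define q where "q a b z = frechet_derivative (\<lambda>z. frechet_derivative f (at z) a) (at z) b" for a b z
  have "q a b x = q b a x"
  proof (rule eq_if_continuous_at_and_agree_nearby[where f = "q a b" and g = "q b a"])
    show "isCont (q a b) x" "isCont (q b a) x"
      using Ck2_onD(3)[OF S] a b oS x continuous_on_eq_continuous_at unfolding q_def[abs_def] by blast+
    fix \<delta> :: real assume "\<delta> > 0"
    obtain r where r: "r > 0" "cball x r \<subseteq> S" using oS x open_contains_cball by blast
    define h where "h = min \<delta> r / 3"
    have h: "h > 0" "2 * h < \<delta>" using \<open>\<delta> > 0\<close> r(1) by (auto simp: h_def)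
    have cb: "cball x (2 * h) \<subseteq> S" using r h by (auto simp: h_def intro!: order_trans[OF _ r(2)])
    obtain \<xi> where \<xi>: "dist \<xi> x \<le> 2 * h"
       "f (x + h *\<^sub>R b + h *\<^sub>R a) - f (x + h *\<^sub>R a) - f (x + h *\<^sub>R b) + f x = h * (h * q a b \<xi>)"
      using second_difference_mean_value[OF S cb h(1) a b] unfolding q_def by blast
    obtain \<eta> where \<eta>: "dist \<eta> x \<le> 2 * h"
       "f (x + h *\<^sub>R a + h *\<^sub>R b) - f (x + h *\<^sub>R b) - f (x + h *\<^sub>R a) + f x = h * (h * q b a \<eta>)"
      using second_difference_mean_value[OF S cb h(1) b a] unfolding q_def by blast
    have "f (x + h *\<^sub>R b + h *\<^sub>R a) - f (x + h *\<^sub>R a) - f (x + h *\<^sub>R b)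
        = f (x + h *\<^sub>R a + h *\<^sub>R b) - f (x + h *\<^sub>R b) - f (x + h *\<^sub>R a)"
      by (simp add: add_ac)
    then have "h * (h * q a b \<xi>) = h * (h * q b a \<eta>)"
      using \<xi>(2) \<eta>(2) by linarith
    then have "q a b \<xi> = q b a \<eta>" using h(1) by simp
    then show "\<exists>\<xi> \<eta>. dist \<xi> x < \<delta> \<and> dist \<eta> x < \<delta> \<and> q a b \<xi> = q b a \<eta>"
      using \<xi>(1) \<eta>(1) h(2) by force
  qed
  then show ?thesis by (simp add: q_def)
qed

lemma frechet_derivative_eq_egrad:
  fixes f :: "real^'m \<Rightarrow> real"
  assumes "f differentiable (at z)"
  shows "frechet_derivative f (at z) w = egrad f z \<bullet> w"
proof -
  have lin: "linear (frechet_derivative f (at z))" using assms by (rule linear_frechet_derivative)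
  have "w = (\<Sum>k\<in>UNIV. (w $ k) *\<^sub>R axis k 1)"
    using basis_expansion[of w] by (simp add: scalar_mult_eq_scaleR)
  then have "frechet_derivative f (at z) w = frechet_derivative f (at z) (\<Sum>k\<in>UNIV. (w $ k) *\<^sub>R axis k 1)"
    by simp
  also have "\<dots> = (\<Sum>k\<in>UNIV. w $ k * frechet_derivative f (at z) (axis k 1))"
    using lin by (simp add: linear_sum linear_scale)
  also have "\<dots> = egrad f z \<bullet> w" by (simp add: egrad_def inner_vec_def mult.commute)
  finally show ?thesis .
qed

lemma has_real_derivative_comp_egrad:
  fixes f :: "real^'m \<Rightarrow> real"
  assumes "(g has_vector_derivative g') (at t)" and f: "f differentiable (at (g t))"
  shows "((\<lambda>t. f (g t)) has_real_derivative egrad f (g t) \<bullet> g') (at t)"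
  using has_real_derivative_comp_frechet_derivative[OF assms] frechet_derivative_eq_egrad[OF f]
  by simp

definition great_circle :: "real^'m \<Rightarrow> real^'m \<Rightarrow> real \<Rightarrow> real^'m" where
  "great_circle x y t = cos t *\<^sub>R x + sin t *\<^sub>R y"

definition great_circle_velocity :: "real^'m \<Rightarrow> real^'m \<Rightarrow> real \<Rightarrow> real^'m" where
  "great_circle_velocity x y t = (- sin t) *\<^sub>R x + cos t *\<^sub>R y"

lemma has_vector_derivative_great_circle: "(great_circle x y has_vector_derivative great_circle_velocity x y t) (at t)"
  unfolding great_circle_def great_circle_velocity_def by (auto intro!: derivative_eq_intros)

lemma norm_great_circle:
  assumes "norm x = 1" "norm y = 1" "x \<bullet> y = 0"
  shows "norm (great_circle x y t) = 1"
proof -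
  have xx: "x \<bullet> x = 1" "y \<bullet> y = 1" using assms by (metis power2_norm_eq_inner power_one)+
  have "great_circle x y t \<bullet> great_circle x y t = (cos t)^2 + (sin t)^2"
    using xx assms(3) by (simp add: great_circle_def inner_add_left inner_add_right inner_commute power2_eq_square)
  then have "(norm (great_circle x y t))^2 = 1" by (simp add: power2_norm_eq_inner)
  then show ?thesis using norm_ge_zero[of "great_circle x y t"] by (auto simp: power2_eq_1_iff)
qed

lemma great_circle_0 [simp]: "great_circle x y 0 = x" "great_circle_velocity x y 0 = y"
  by (simp_all add: great_circle_def great_circle_velocity_def)

lemma has_real_derivative_comp_great_circle:
  fixes f :: "real^'m \<Rightarrow> real"
  assumes "f differentiable (at (great_circle x y t))"
  shows "((\<lambda>t. f (great_circle x y t)) has_real_derivative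
      egrad f (great_circle x y t) \<bullet> great_circle_velocity x y t) (at t)"
  using has_real_derivative_comp_egrad[OF has_vector_derivative_great_circle assms] .

lemma inner_egrad_partials_eq_ehess:
  "(\<Sum>k\<in>UNIV. (egrad (\<lambda>z. frechet_derivative f (at z) (axis k 1)) x \<bullet> y) * y $ k)
     = y \<bullet> (ehess f x *v y)"
proof -
  have "(\<Sum>k\<in>UNIV. (egrad (\<lambda>z. frechet_derivative f (at z) (axis k 1)) x \<bullet> y) * y $ k)
      = (\<Sum>l\<in>UNIV. \<Sum>k\<in>UNIV. ehess f x $ l $ k * y $ l * y $ k)"
    by (subst sum.swap) (simp add: egrad_def ehess_def inner_vec_def sum_distrib_right)
  also have "\<dots> = y \<bullet> (ehess f x *v y)"
    unfolding inner_vec_def matrix_vector_mult_def inner_real_def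
    by (simp add: sum_distrib_left mult_ac)
  finally show ?thesis .
qed

text \<open>Along a unit-speed great circle the second derivative of \<open>f\<close> is the spherical Hessian
  \<open>D\<^sup>2f(y, y) - Df(x) x\<close>; the second term comes from the acceleration \<open>-x\<close>.\<close>

lemma has_real_derivative_great_circle_second:
  fixes f :: "real^'m \<Rightarrow> real"
  assumes diff: "\<And>k. (\<lambda>z. frechet_derivative f (at z) (axis k 1)) differentiable (at x)"
  shows "((\<lambda>t. egrad f (great_circle x y t) \<bullet> great_circle_velocity x y t) has_real_derivative
      y \<bullet> (ehess f x *v y) - egrad f x \<bullet> x) (at 0)"
proof -
  let ?p = "\<lambda>k z. frechet_derivative f (at z) (axis k 1)"
  have summand: "((\<lambda>t. ?p k (great_circle x y t) * (great_circle_velocity x y t $ k)) has_real_derivative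
      (egrad (?p k) x \<bullet> y) * y $ k + ?p k x * (- x $ k)) (at 0)" for k
  proof -
    have "((\<lambda>t. ?p k (great_circle x y t)) has_real_derivative egrad (?p k) x \<bullet> y) (at 0)"
      using has_real_derivative_comp_great_circle[of "?p k" x y 0] diff by simp
    moreover have "((\<lambda>t. great_circle_velocity x y t $ k) has_real_derivative - x $ k) (at 0)"
      unfolding great_circle_velocity_def by (auto intro!: derivative_eq_intros)
    ultimately show ?thesis
      using DERIV_mult by (fastforce simp: mult.commute)
  qed
  have "(\<lambda>t. egrad f (great_circle x y t) \<bullet> great_circle_velocity x y t)
      = (\<lambda>t. \<Sum>k\<in>UNIV. ?p k (great_circle x y t) * (great_circle_velocity x y t $ k))"
    by (simp add: egrad_def inner_vec_def)
  moreover have "(\<Sum>k\<in>UNIV. (egrad (?p k) x \<bullet> y) * y $ k + ?p k x * (- x $ k))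
      = y \<bullet> (ehess f x *v y) - egrad f x \<bullet> x"
  proof -
    have "(\<Sum>k\<in>UNIV. ?p k x * (- x $ k)) = - (egrad f x \<bullet> x)"
      by (simp add: egrad_def inner_vec_def sum_negf)
    with inner_egrad_partials_eq_ehess[of f x y] show ?thesis by (simp only: sum.distrib)
  qed
  moreover have "((\<lambda>t. \<Sum>k\<in>UNIV. ?p k (great_circle x y t) * (great_circle_velocity x y t $ k))
      has_real_derivative (\<Sum>k\<in>UNIV. (egrad (?p k) x \<bullet> y) * y $ k + ?p k x * (- x $ k))) (at 0)"
    by (rule DERIV_sum) (rule summand)
  ultimately show ?thesis by simp
qed

lemma second_derivative_test_max:
  fixes \<phi> \<phi>' :: "real \<Rightarrow> real"
  assumes d: "\<And>t. (\<phi> has_real_derivative \<phi>' t) (at t)" and d2: "(\<phi>' has_real_derivative L) (at 0)"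
    and mx: "\<And>t. \<phi> t \<le> \<phi> 0"
  shows "\<phi>' 0 = 0" and "L \<le> 0"
proof -
  show z: "\<phi>' 0 = 0" using DERIV_local_max[OF d[of 0], of 1] mx by auto
  show "L \<le> 0"
  proof (rule ccontr)
    assume "\<not> L \<le> 0"
    then have "L > 0" by simp
    from DERIV_pos_inc_right[OF d2 this] obtain e where e: "e > 0" "\<And>h. h > 0 \<Longrightarrow> h < e \<Longrightarrow> \<phi>' 0 < \<phi>' (0 + h)"
      by blast
    have "e / 2 > 0" using e by simp
    from MVT2[OF this, of \<phi> \<phi>'] d obtain z where z1: "0 < z" "z < e / 2" "\<phi> (e/2) - \<phi> 0 = (e/2 - 0) * \<phi>' z"
      by blast
    have "\<phi>' z > 0" using e(2)[of z] z1 z by simp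
    then have "(e/2 - 0) * \<phi>' z > 0" using e by simp
    then have "\<phi> (e/2) - \<phi> 0 > 0" using z1(3) by linarith
    then show False using mx[of "e/2"] by simp
  qed
qed

lemma tproj_mult_vec: "tproj x *v y = y - (x \<bullet> y) *\<^sub>R x"
proof -
  have "(\<chi> i j. x $ i * x $ j) *v y = (x \<bullet> y) *\<^sub>R x"
    by (simp add: vec_eq_iff matrix_vector_mult_def inner_vec_def sum_distrib_left sum_distrib_right mult_ac)
  then show ?thesis by (simp add: tproj_def matrix_vector_mult_diff_rdistrib)
qed

lemma symmetric_tproj: "transpose (tproj x) = tproj x"
  by (simp add: tproj_def transpose_diff transpose_mat) (simp add: transpose_def vec_eq_iff mult.commute)

lemma symmetric_ehess:
  fixes f :: "real^'m \<Rightarrow> real"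
  assumes S: "Ck_on 2 S f" and oS: "open S" and x: "x \<in> S"
  shows "transpose (ehess f x) = ehess f x"
  unfolding transpose_def ehess_def vec_eq_iff
  using frechet_derivative_partials_commute[OF S oS x] by simp

lemma symmetric_bmat:
  assumes "transpose (ehess f x) = ehess f x"
  shows "transpose (bmat f x) = bmat f x"
  using assms unfolding bmat_def shess_def
  by (simp add: transpose_add transpose_diff transpose_scalar matrix_transpose_mul symmetric_tproj
      matrix_mul_assoc)

lemma bmat_mult_normal:
  assumes "norm x = 1"
  shows "bmat f x *v x = 0"
proof -
  have "tproj x *v x = 0" using assms by (simp add: tproj_mult_vec dot_square_norm)
  then show ?thesis
    unfolding bmat_def shess_def
    by (simp add: matrix_vector_mult_add_rdistrib scaleR_matrix_vector_assoc[symmetric]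
        matrix_vector_mul_assoc[symmetric])
qed

lemma inner_bmat_tangent:
  assumes "y \<bullet> x = 0"
  shows "y \<bullet> (bmat f x *v y) = y \<bullet> (ehess f x *v y) - (egrad f x \<bullet> x) * (y \<bullet> y) + f x * (y \<bullet> y)"
proof -
  let ?M = "ehess f x - (egrad f x \<bullet> x) *\<^sub>R mat 1"
  have Py: "tproj x *v y = y" using assms by (simp add: tproj_mult_vec inner_commute)
  have "y \<bullet> (shess f x *v y) = y \<bullet> (tproj x *v (?M *v y))"
    unfolding shess_def by (simp add: matrix_vector_mul_assoc[symmetric] Py)
  also have "\<dots> = y \<bullet> (ehess f x *v y) - (egrad f x \<bullet> x) * (y \<bullet> y)"
    using symmetric_matrix_inner_swap[OF symmetric_tproj, of y x] Py
    by (simp add: matrix_vector_mult_diff_rdistrib scaleR_matrix_vector_assoc[symmetric]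
        inner_diff_right)
  finally show ?thesis
    unfolding bmat_def
    by (simp add: matrix_vector_mult_add_rdistrib inner_add_right scaleR_matrix_vector_assoc[symmetric] Py)
qed

section \<open>Touching points\<close>

text \<open>At a point \<open>x\<close> where \<open>s (v - c u)\<close> attains its maximum \<open>0\<close> on the sphere, restrict to the
  great circle through \<open>x\<close> in a unit tangent direction \<open>y\<close> and apply the second derivative test.\<close>

lemma touching_point_unit_tangent:
  fixes u v :: "real^'m \<Rightarrow> real"
  assumes Sv: "Ck_on 2 S v" and Su: "Ck_on 2 S u" and sub: "sphere 0 1 \<subseteq> S"
    and nx: "norm x = 1" and ny: "norm y = 1" and yx: "y \<bullet> x = 0"
    and le: "\<And>z. z \<in> sphere 0 1 \<Longrightarrow> s * (v z - c * u z) \<le> 0" and eq: "v x = c * u x"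
  shows "s * (egrad v x \<bullet> y - c * (egrad u x \<bullet> y)) = 0"
    and "s * ((y \<bullet> (ehess v x *v y) - egrad v x \<bullet> x) - c * (y \<bullet> (ehess u x *v y) - egrad u x \<bullet> x)) \<le> 0"
proof -
  have xy: "x \<bullet> y = 0" using yx by (simp add: inner_commute)
  have on_S: "great_circle x y t \<in> S" for t using norm_great_circle[OF nx ny xy, of t] sub by auto
  have x_S: "x \<in> S" using nx sub by auto
  define \<gamma>' where "\<gamma>' t = great_circle_velocity x y t" for t
  define \<phi> where "\<phi> t = s * (v (great_circle x y t) - c * u (great_circle x y t))" for t
  define \<phi>' where "\<phi>' t = s * (egrad v (great_circle x y t) \<bullet> \<gamma>' t - c * (egrad u (great_circle x y t) \<bullet> \<gamma>' t))"
    for t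
  have "(\<phi> has_real_derivative \<phi>' t) (at t)" for t
    unfolding \<phi>_def[abs_def] \<phi>'_def \<gamma>'_def
    using Ck2_onD(1)[OF Sv on_S] Ck2_onD(1)[OF Su on_S]
    by (intro DERIV_cmult DERIV_diff has_real_derivative_comp_great_circle)
  moreover have "(\<phi>' has_real_derivative
      s * ((y \<bullet> (ehess v x *v y) - egrad v x \<bullet> x) - c * (y \<bullet> (ehess u x *v y) - egrad u x \<bullet> x))) (at 0)"
    unfolding \<phi>'_def[abs_def] \<gamma>'_def
    using Ck2_onD(2)[OF Sv x_S] Ck2_onD(2)[OF Su x_S]
    by (intro DERIV_cmult DERIV_diff has_real_derivative_great_circle_second) simp_all
  moreover have "\<phi> t \<le> \<phi> 0" for t
    using le[of "great_circle x y t"] norm_great_circle[OF nx ny xy, of t] eq by (simp add: \<phi>_def)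
  ultimately have "\<phi>' 0 = 0"
    and "s * ((y \<bullet> (ehess v x *v y) - egrad v x \<bullet> x) - c * (y \<bullet> (ehess u x *v y) - egrad u x \<bullet> x)) \<le> 0"
    by (rule second_derivative_test_max)+
  then show "s * (egrad v x \<bullet> y - c * (egrad u x \<bullet> y)) = 0"
    and "s * ((y \<bullet> (ehess v x *v y) - egrad v x \<bullet> x) - c * (y \<bullet> (ehess u x *v y) - egrad u x \<bullet> x)) \<le> 0"
    by (simp_all add: \<phi>'_def \<gamma>'_def)
qed

lemma touching_point_sgrad:
  fixes u v :: "real^'m \<Rightarrow> real"
  assumes Sv: "Ck_on 2 S v" and Su: "Ck_on 2 S u" and sub: "sphere 0 1 \<subseteq> S"
    and nx: "norm x = 1" and s: "s = 1 \<or> s = -1"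
    and le: "\<And>z. z \<in> sphere 0 1 \<Longrightarrow> s * (v z - c * u z) \<le> 0" and eq: "v x = c * u x"
  shows "sgrad v x = c *\<^sub>R sgrad u x"
proof -
  define d where "d = sgrad v x - c *\<^sub>R sgrad u x"
  have dx: "d \<bullet> x = 0" using nx by (simp add: d_def sgrad_def inner_diff_left dot_square_norm algebra_simps)
  have "d \<bullet> y = 0" if yx: "y \<bullet> x = 0" for y
  proof (cases "y = 0")
    case False
    define y' where "y' = y /\<^sub>R norm y"
    have y': "norm y' = 1" "y' \<bullet> x = 0" using False yx by (simp_all add: y'_def)
    have "s * (egrad v x \<bullet> y' - c * (egrad u x \<bullet> y')) = 0"
      by (rule touching_point_unit_tangent(1)[OF Sv Su sub nx y' le eq])
    then have "egrad v x \<bullet> y' = c * (egrad u x \<bullet> y')" using s by auto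
    moreover have "egrad f x \<bullet> y = norm y * (egrad f x \<bullet> y')" for f
      using False by (simp add: y'_def)
    ultimately have "egrad v x \<bullet> y = c * (egrad u x \<bullet> y)" by simp
    moreover have "d \<bullet> y = egrad v x \<bullet> y - c * (egrad u x \<bullet> y)"
      using yx by (simp add: d_def sgrad_def inner_diff_left algebra_simps inner_commute)
    ultimately show ?thesis by simp
  qed simp
  then have "d \<bullet> d = 0" using dx by blast
  then show ?thesis by (simp add: d_def)
qed

lemma touching_point_bmat:
  fixes u v :: "real^'m \<Rightarrow> real"
  assumes Sv: "Ck_on 2 S v" and Su: "Ck_on 2 S u" and sub: "sphere 0 1 \<subseteq> S"
    and nx: "norm x = 1"
    and le: "\<And>z. z \<in> sphere 0 1 \<Longrightarrow> s * (v z - c * u z) \<le> 0" and eq: "v x = c * u x"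
    and yx: "y \<bullet> x = 0"
  shows "s * (y \<bullet> ((bmat v x - c *\<^sub>R bmat u x) *v y)) \<le> 0"
proof (cases "y = 0")
  case False
  define y' where "y' = y /\<^sub>R norm y"
  have y': "norm y' = 1" "y' \<bullet> x = 0" using False yx by (simp_all add: y'_def)
  have quadratic: "y \<bullet> (A *v y) = (norm y)^2 * (y' \<bullet> (A *v y'))" for A :: "real^'m^'m"
    using False by (simp add: y'_def matrix_vector_mult_scaleR power2_eq_square field_simps)
  have Bv: "y' \<bullet> (bmat v x *v y') = y' \<bullet> (ehess v x *v y') - egrad v x \<bullet> x + v x"
    using inner_bmat_tangent[OF y'(2), of v] y'(1) by (simp add: dot_square_norm)
  have Bu: "y' \<bullet> (bmat u x *v y') = y' \<bullet> (ehess u x *v y') - egrad u x \<bullet> x + u x"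
    using inner_bmat_tangent[OF y'(2), of u] y'(1) by (simp add: dot_square_norm)
  have "s * (y' \<bullet> ((bmat v x - c *\<^sub>R bmat u x) *v y'))
      = s * (y' \<bullet> (bmat v x *v y') - c * (y' \<bullet> (bmat u x *v y')))"
    by (simp add: matrix_vector_mult_diff_rdistrib scaleR_matrix_vector_assoc[symmetric] inner_diff_right)
  also have "\<dots> = s * ((y' \<bullet> (ehess v x *v y') - egrad v x \<bullet> x) - c * (y' \<bullet> (ehess u x *v y') - egrad u x \<bullet> x))"
    unfolding Bv Bu eq by (simp add: algebra_simps)
  also have "\<dots> \<le> 0" by (rule touching_point_unit_tangent(2)[OF Sv Su sub nx y' le eq])
  finally show ?thesis
    unfolding quadratic[of "bmat v x - c *\<^sub>R bmat u x"] by (simp add: mult.left_commute[of s] mult_nonneg_nonpos)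
qed simp

section \<open>The linearized operator at a touching point\<close>

text \<open>With \<open>v = c u\<close> and \<open>\<nabla>v = c \<nabla>u\<close>, all zero-order terms of \<open>L\<^sub>u v\<close> are multiples of the
  right-hand side of the equation; the two gradient terms combine through
  \<open>u\<^sup>2 + |\<nabla>u|\<^sup>2 = \<rho>\<^sup>2\<close>.\<close>

lemma Flin_at_touching_point:
  fixes u \<phi> v :: "real^'m \<Rightarrow> real" and k :: nat and p q c :: real
  assumes k: "1 \<le> k" and u_pos: "u x > 0"
    and equation: "Fk k x (bmat u x)
           = u x powr ((p - 1) / k) * ((u x)\<^sup>2 + (norm (sgrad u x))\<^sup>2) powr ((k + 1 - q) / (2 * k))
             * \<phi> x powr (1 / k)"
    and L0: "Lop k p q \<phi> u v x = 0"
    and vx: "v x = c * u x" and sgrad_v: "sgrad v x = c *\<^sub>R sgrad u x"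
  shows "Flin k x (bmat u x) (bmat v x) = (1 + (p - q) / k) * c * Fk k x (bmat u x)"
proof -
  define a where "a = (p - 1) / real k"
  define b where "b = (real k + 1 - q) / real k"
  define U where "U = u x"
  define N where "N = norm (sgrad u x)"
  define R where "R = rho u x"
  define Ph where "Ph = \<phi> x powr (1 / real k)"
  define PU where "PU = U powr a"
  define PR where "PR = R powr b"
  have U_pos: "U > 0" using u_pos by (simp add: U_def)
  have Rsq: "R^2 = U^2 + N^2" by (simp add: R_def rho_def U_def N_def)
  have "0 < (u x)^2 + (norm (sgrad u x))^2" using u_pos by (intro add_pos_nonneg) auto
  then have R_pos: "R > 0" unfolding R_def rho_def by simp
  have F: "Fk k x (bmat u x) = PU * PR * Ph"
  proof -
    have "R = (U^2 + N^2) powr (1/2)"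
      by (simp add: R_def rho_def U_def N_def powr_half_sqrt)
    then have "PR = (U^2 + N^2) powr (b / 2)" using R_pos by (simp add: PR_def powr_powr)
    moreover have "b / 2 = (real k + 1 - q) / (2 * real k)" by (simp add: b_def)
    ultimately show ?thesis using equation by (simp add: U_def N_def PU_def a_def Ph_def add_ac)
  qed
  have "Flin k x (bmat u x) (bmat v x) = a * U powr (a - 1) * PR * Ph * v x
      + b * U powr (a + 1) * R powr (b - 2) * Ph * v x
      + b * U powr a * R powr (b - 2) * Ph * (sgrad u x \<bullet> sgrad v x)"
    using L0 unfolding Lop_def a_def b_def U_def R_def PR_def Ph_def by simp
  also have "\<dots> = a * (PU / U) * PR * Ph * (c * U) + b * (PU * U) * (PR / R^2) * Ph * (c * U)
      + b * PU * (PR / R^2) * Ph * (c * N^2)"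
    using U_pos R_pos
    by (simp add: PU_def PR_def powr_diff powr_add powr_numeral vx U_def N_def sgrad_v
        power2_norm_eq_inner)
  also have "\<dots> = a * c * (PU * PR * Ph) + b * c * (PU * PR * Ph) * ((U^2 + N^2) / R^2)"
    using U_pos R_pos by (simp add: field_simps power2_eq_square)
  also have "\<dots> = (1 + (p - q) / k) * c * Fk k x (bmat u x)"
    using R_pos k unfolding Rsq[symmetric] by (simp add: F a_def b_def field_simps)
  finally show ?thesis .
qed

locale linearized_equation_on_sphere =
  fixes k :: nat and p q :: real and \<phi> u v :: "real^'m \<Rightarrow> real" and S :: "(real^'m) set"
  assumes k: "1 \<le> k" "k \<le> CARD('m) - 1" and p_gt_q: "p > q"
    and open_S: "open S" and sphere_subset: "sphere 0 1 \<subseteq> S"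
    and u_C2: "Ck_on 2 S u" and v_C2: "Ck_on 2 S v"
    and phi_pos: "\<And>x. x \<in> sphere 0 1 \<Longrightarrow> \<phi> x > 0"
    and u_pos: "\<And>x. x \<in> sphere 0 1 \<Longrightarrow> u x > 0"
    and convex: "strictly_sph_convex u"
    and equation: "\<And>x. x \<in> sphere 0 1 \<Longrightarrow> Fk k x (bmat u x)
           = u x powr ((p - 1) / k) * ((u x)\<^sup>2 + (norm (sgrad u x))\<^sup>2) powr ((k + 1 - q) / (2 * k))
             * \<phi> x powr (1 / k)"
    and linearized: "\<And>x. x \<in> sphere 0 1 \<Longrightarrow> Lop k p q \<phi> u v x = 0"
begin

lemma touching_point_sign:
  assumes x: "x \<in> sphere 0 1" and s: "s = 1 \<or> s = -1"
    and le: "\<And>z. z \<in> sphere 0 1 \<Longrightarrow> s * (v z - c * u z) \<le> 0" and vx: "v x = c * u x"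
  shows "s * c \<le> 0"
proof -
  let ?B = "bmat u x" and ?V = "bmat v x"
  have nx: "norm x = 1" and xS: "x \<in> S" using x sphere_subset by auto
  have symB: "transpose ?B = ?B" by (rule symmetric_bmat[OF symmetric_ehess[OF u_C2 open_S xS]])
  have "transpose ?V = ?V" by (rule symmetric_bmat[OF symmetric_ehess[OF v_C2 open_S xS]])
  then have symG: "transpose (?V - c *\<^sub>R ?B) = ?V - c *\<^sub>R ?B"
    using symB by (simp add: transpose_diff transpose_scalar)
  have Bx: "?B *v x = 0" and Gx: "(?V - c *\<^sub>R ?B) *v x = 0"
    using bmat_mult_normal[OF nx]
    by (simp_all add: matrix_vector_mult_diff_rdistrib scaleR_matrix_vector_assoc[symmetric])
  have "s * Flin k x ?B (c *\<^sub>R ?B + (?V - c *\<^sub>R ?B)) \<le> s * (c * Fk k x ?B)"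
  proof (rule Flin_sign[OF symB symG Bx Gx nx k _ s])
    show "y \<bullet> (?B *v y) > 0" if "y \<bullet> x = 0" "y \<noteq> 0" for y
      using convex x that unfolding strictly_sph_convex_def by blast
    show "s * (y \<bullet> ((?V - c *\<^sub>R ?B) *v y)) \<le> 0" if "y \<bullet> x = 0" for y
      by (rule touching_point_bmat[OF v_C2 u_C2 sphere_subset nx le vx that])
  qed
  moreover have "Flin k x ?B ?V = (1 + (p - q) / k) * c * Fk k x ?B"
    using touching_point_sgrad[OF v_C2 u_C2 sphere_subset nx s le vx] x
    by (intro Flin_at_touching_point[OF k(1) u_pos equation linearized vx])
  ultimately have "(s * c) * ((p - q) / k * Fk k x ?B) \<le> 0"
    by (simp add: algebra_simps)
  moreover have "Fk k x ?B > 0"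
    using equation[OF x] u_pos[OF x] phi_pos[OF x] by (simp add: add_pos_nonneg)
  then have "(p - q) / k * Fk k x ?B > 0" using p_gt_q k(1) by simp
  ultimately show ?thesis by (metis mult_pos_pos not_le)
qed

lemma signed_v_nonpos:
  assumes s: "s = 1 \<or> s = -1" and z: "z \<in> sphere 0 1"
  shows "s * v z \<le> 0"
proof -
  let ?w = "\<lambda>z. s * (v z / u z)"
  have "continuous_on (sphere 0 1) u" "continuous_on (sphere 0 1) v"
    using Ck2_on_continuous[OF u_C2] Ck2_on_continuous[OF v_C2] continuous_on_subset sphere_subset
    by blast+
  then have "continuous_on (sphere 0 1) ?w"
    using u_pos by (intro continuous_intros) (auto simp: less_imp_neq[symmetric])
  moreover have "sphere (0::real^'m) 1 \<noteq> {}" by simp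
  ultimately obtain x where x: "x \<in> sphere 0 1" and max: "\<And>z. z \<in> sphere 0 1 \<Longrightarrow> ?w z \<le> ?w x"
    using continuous_attains_sup[OF compact_sphere] by blast
  define c where "c = v x / u x"
  have vx: "v x = c * u x" using u_pos[OF x] by (simp add: c_def)
  have "s * (v y - c * u y) = (?w y - ?w x) * u y" if "y \<in> sphere 0 1" for y
    using u_pos[OF that] by (simp add: c_def field_simps)
  then have "s * (v y - c * u y) \<le> 0" if "y \<in> sphere 0 1" for y
    using max[OF that] u_pos[OF that] that by (simp add: mult_nonpos_nonneg)
  then have "s * c \<le> 0" by (rule touching_point_sign[OF x s _ vx])
  have "s * v z = ?w z * u z" using u_pos[OF z] by simp
  also have "\<dots> \<le> ?w x * u z" by (rule mult_right_mono[OF max[OF z]]) (use u_pos[OF z] in simp)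
  also have "\<dots> = (s * c) * u z" by (simp add: c_def)
  also have "\<dots> \<le> 0" using \<open>s * c \<le> 0\<close> u_pos[OF z] by (simp add: mult_nonpos_nonneg)
  finally show ?thesis .
qed

end

theorem mainTheorem8:
  fixes u \<phi> v :: "real^'m \<Rightarrow> real" and k :: nat and p q :: real
  assumes "1 \<le> k" and "k \<le> CARD('m) - 1"
    and "p > q"
    and "smooth_sphere \<phi>" and "\<forall>x \<in> sphere 0 1. \<phi> x > 0"
    and "smooth_sphere u" and "\<forall>x \<in> sphere 0 1. u x > 0"
    and "strictly_sph_convex u"
    and "\<forall>x \<in> sphere 0 1. Fk k x (bmat u x)
           = u x powr ((p - 1) / k) * ((u x)\<^sup>2 + (norm (sgrad u x))\<^sup>2) powr ((k + 1 - q) / (2 * k))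
             * \<phi> x powr (1 / k)"
    and "Ck_sphere 2 v"
    and "\<forall>x \<in> sphere 0 1. Lop k p q \<phi> u v x = 0"
  shows "\<forall>x \<in> sphere 0 1. v x = 0"
proof -
  obtain Su where Su: "open Su" "sphere 0 1 \<subseteq> Su" "smooth_on Su u"
    using assms(6) unfolding smooth_sphere_def by blast
  obtain Sv where Sv: "open Sv" "sphere 0 1 \<subseteq> Sv" "Ck_on 2 Sv v"
    using assms(10) unfolding Ck_sphere_def by blast
  interpret linearized_equation_on_sphere k p q \<phi> u v "Su \<inter> Sv"
    using assms Su Sv unfolding smooth_on_def by unfold_locales (auto intro: Ck_on_subset)
  show ?thesis
    using signed_v_nonpos[of 1] signed_v_nonpos[of "-1"] by fastforce
qed

end
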